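(* Let $d\ge 2$. If the graph of a stacked $(d+1)$-polytope is $d$-ball packable, then its $d$-ball packing is Apollonian, and it is unique up to Möbius transformations and reflections.
   Context: A simplicial polytope is stacked if it is obtained from a simplex by repeatedly gluing a new simplex onto a facet. A $d$-ball in $\hat{\mathbb R}^d$ is a closed ball, closed exterior of an open ball with $\infty$, or a closed half-space with $\infty$; a $d$-ball packing is a collection of $d$-balls with disjoint interiors; its tangency graph joins balls meeting in exactly one point; a graph is $d$-ball packable if isomorphic to the tangency graph of some $d$-ball packing. A Descartes configuration in dimension $d$ is a set of $d+2$ pairwise tangent $d$-balls with disjoint interiors. A collection of $d$-balls is Apollonian if it can be built from a Descartes configuration by repeatedly adding, for some $d+1$ pairwise tangent balls already present, a new ball tangent to all of them. *)

theory Defs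
  imports "HOL-Analysis.Analysis"
begin

text \<open>Points of the one-point compactification of R^d are represented as
  (real^'n) option, with None standing for the point at infinity.
  d = CARD('n).\<close>

datatype 'n dball =
    Ball "real^'n" real
  | CoBall "real^'n" real
  | Half "real^'n" real

fun dball_wf :: "('n::finite) dball \<Rightarrow> bool" where
  "dball_wf (Ball c r) = (r > 0)"
| "dball_wf (CoBall c r) = (r > 0)"
| "dball_wf (Half u a) = (u \<noteq> 0)"

fun dset :: "('n::finite) dball \<Rightarrow> (real^'n) option set" where
  "dset (Ball c r) = Some ` cball c r"
| "dset (CoBall c r) = insert None (Some ` (- ball c r))"
| "dset (Half u a) = insert None (Some ` {x. u \<bullet> x \<le> a})"

fun dint :: "('n::finite) dball \<Rightarrow> (real^'n) option set" where
  "dint (Ball c r) = Some ` ball c r"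
| "dint (CoBall c r) = insert None (Some ` (- cball c r))"
| "dint (Half u a) = Some ` {x. u \<bullet> x < a}"

definition tangent :: "('n::finite) dball \<Rightarrow> 'n dball \<Rightarrow> bool" where
  "tangent b1 b2 \<longleftrightarrow> (\<exists>p. dset b1 \<inter> dset b2 = {p})"

definition packing :: "'v set \<Rightarrow> ('v \<Rightarrow> ('n::finite) dball) \<Rightarrow> bool" where
  "packing V B \<longleftrightarrow> (\<forall>v\<in>V. dball_wf (B v)) \<and>
     (\<forall>u\<in>V. \<forall>v\<in>V. u \<noteq> v \<longrightarrow> dint (B u) \<inter> dint (B v) = {})"

definition tangency_graph_is :: "'v set \<Rightarrow> ('v \<Rightarrow> 'v \<Rightarrow> bool) \<Rightarrow> ('v \<Rightarrow> ('n::finite) dball) \<Rightarrow> bool" where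
  "tangency_graph_is V E B \<longleftrightarrow>
     (\<forall>u\<in>V. \<forall>v\<in>V. u \<noteq> v \<longrightarrow> (E u v \<longleftrightarrow> tangent (B u) (B v)))"

definition descartes :: "nat \<Rightarrow> ('n::finite) dball set \<Rightarrow> bool" where
  "descartes d S \<longleftrightarrow> finite S \<and> card S = d + 2 \<and> (\<forall>b\<in>S. dball_wf b) \<and>
     (\<forall>b1\<in>S. \<forall>b2\<in>S. b1 \<noteq> b2 \<longrightarrow> tangent b1 b2 \<and> dint b1 \<inter> dint b2 = {})"

inductive apollonian :: "nat \<Rightarrow> ('n::finite) dball set \<Rightarrow> bool" for d where
  apoll_base: "descartes d S \<Longrightarrow> apollonian d S"
| apoll_step: "\<lbrakk> apollonian d S; T \<subseteq> S; card T = d + 1;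
      \<forall>t1\<in>T. \<forall>t2\<in>T. t1 \<noteq> t2 \<longrightarrow> tangent t1 t2;
      dball_wf b; b \<notin> S; \<forall>t\<in>T. tangent b t \<rbrakk> \<Longrightarrow> apollonian d (insert b S)"

fun sphere_inversion :: "real^'n \<Rightarrow> real \<Rightarrow> (real^'n) option \<Rightarrow> (real^'n) option" where
  "sphere_inversion c r None = Some c"
| "sphere_inversion c r (Some x) =
     (if x = c then None else Some (c + (r\<^sup>2 / (norm (x - c))\<^sup>2) *\<^sub>R (x - c)))"

fun hyperplane_reflection :: "real^'n \<Rightarrow> real \<Rightarrow> (real^'n) option \<Rightarrow> (real^'n) option" where
  "hyperplane_reflection u a None = None"
| "hyperplane_reflection u a (Some x) = Some (x - (2 * (u \<bullet> x - a) / (u \<bullet> u)) *\<^sub>R u)"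

inductive_set moebius :: "((real^('n::finite)) option \<Rightarrow> (real^'n) option) set" where
  moeb_id: "id \<in> moebius"
| moeb_inv: "f \<in> moebius \<Longrightarrow> r > 0 \<Longrightarrow> sphere_inversion c r \<circ> f \<in> moebius"
| moeb_refl: "f \<in> moebius \<Longrightarrow> u \<noteq> 0 \<Longrightarrow> hyperplane_reflection u a \<circ> f \<in> moebius"

text \<open>stacked_graph d V E Fs: (V,E) is the graph of a stacked (d+1)-polytope
  whose facets (as vertex sets) are Fs.\<close>
inductive stacked_graph :: "nat \<Rightarrow> 'v set \<Rightarrow> ('v \<Rightarrow> 'v \<Rightarrow> bool) \<Rightarrow> 'v set set \<Rightarrow> bool"
  for d where
  stack_simplex: "\<lbrakk> finite V; card V = d + 2 \<rbrakk> \<Longrightarrow>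
     stacked_graph d V (\<lambda>x y. x \<in> V \<and> y \<in> V \<and> x \<noteq> y) {F. F \<subseteq> V \<and> card F = d + 1}"
| stack_glue: "\<lbrakk> stacked_graph d V E Fs; F \<in> Fs; w \<notin> V \<rbrakk> \<Longrightarrow>
     stacked_graph d (insert w V)
       (\<lambda>x y. E x y \<or> (x = w \<and> y \<in> F) \<or> (y = w \<and> x \<in> F))
       ((Fs - {F}) \<union> {insert w (F - {u}) | u. u \<in> F})"

definition stacked_polytope_graph :: "nat \<Rightarrow> 'v set \<Rightarrow> ('v \<Rightarrow> 'v \<Rightarrow> bool) \<Rightarrow> bool" where
  "stacked_polytope_graph d V E \<longleftrightarrow> (\<exists>Fs. stacked_graph d V E Fs)"

end

theory Submission
  imports Defs
begin

text \<open>A ball kissing two kissing balls \<open>b\<^sub>1\<close>, \<open>b\<^sub>2\<close> becomes, after an inversion centred at their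
  point of contact, a ball of a fixed radius \<open>\<rho>\<close> squeezed between two parallel half-spaces and
  centred on the middle hyperplane. Hence the \<open>d + 2\<close> balls of a Descartes configuration are
  Moebius equivalent to two half-spaces and \<open>d\<close> equal balls whose centres form a regular simplex,
  and a similarity matches any two such normal forms. Moreover, given \<open>d + 1\<close> mutually kissing
  balls and a ball \<open>Z\<close> kissing all of them, at most one other ball kisses all of them with
  interior disjoint from \<open>Z\<close>: in normal form the centres of the candidates are at distance
  \<open>2\<rho>\<close> from \<open>d - 1\<close> points of a hyperplane of dimension \<open>d - 1\<close>, a condition met by only two
  points. Following the stacking, the ball of each new vertex kisses the balls of the facet it is
  glued onto and is an Apollonian addition; an old vertex adjacent to the whole facet provides
  \<open>Z\<close>, so the new ball is determined by the old ones, and uniqueness propagates.\<close>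

lemma power2_less_iff_nonneg: "0 \<le> a \<Longrightarrow> 0 \<le> b \<Longrightarrow> a\<^sup>2 < b\<^sup>2 \<longleftrightarrow> a < (b::real)"
  by (meson not_le power_mono_iff zero_less_numeral)

lemma image_eq_of_involution:
  assumes "\<And>p. f (f p) = p" and "\<And>p. f p \<in> A' \<longleftrightarrow> p \<in> A"
  shows "f ` A = A'"
  using assms by (metis image_eqI subsetI subset_antisym image_subset_iff)

lemma inj_image_singleton_iff:
  assumes "inj f"
  shows "(\<exists>p. f ` S = {p}) \<longleftrightarrow> (\<exists>q. S = {q})"
proof
  assume "\<exists>p. f ` S = {p}"
  then obtain p where p: "f ` S = {p}" by blast
  then obtain q where "q \<in> S" "f q = p" by (metis image_iff insertI1)
  with p assms have "S = {q}" by (auto dest: injD)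
  then show "\<exists>q. S = {q}" ..
qed auto

lemma image_Collect_surj:
  assumes "surj h" "\<And>x. g (h x) = \<phi> x"
  shows "h ` {x. P (\<phi> x)} = {y. P (g y)}"
proof
  show "{y. P (g y)} \<subseteq> h ` {x. P (\<phi> x)}"
  proof
    fix y assume "y \<in> {y. P (g y)}"
    moreover obtain x where "y = h x" using assms(1) by (metis surjD)
    ultimately show "y \<in> h ` {x. P (\<phi> x)}" using assms(2) by auto
  qed
qed (use assms(2) in auto)

lemma unbounded_halfspace_gt:
  fixes u :: "'a::real_inner"
  assumes "u \<noteq> 0"
  shows "\<not> bounded {x. a < u \<bullet> x}"
proof
  assume "bounded {x. a < u \<bullet> x}"
  then obtain M where M: "\<And>x. a < u \<bullet> x \<Longrightarrow> norm x \<le> M" by (auto simp: bounded_iff)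
  define s where "s = \<bar>a\<bar> + norm u * \<bar>M\<bar> + 1"
  define x where "x = (s / (u \<bullet> u)) *\<^sub>R u"
  have ux: "u \<bullet> x = s" using assms by (simp add: x_def)
  moreover have "a < s"
    unfolding s_def by (smt (verit, best) abs_ge_self abs_ge_zero mult_nonneg_nonneg norm_ge_zero)
  ultimately have "norm x \<le> M" using M by simp
  then have "norm u * norm x \<le> norm u * \<bar>M\<bar>" by (simp add: mult_left_mono)
  then have "u \<bullet> x \<le> norm u * \<bar>M\<bar>" using norm_cauchy_schwarz[of u x] by linarith
  then show False using ux by (simp add: s_def)
qed

lemma independent_regular_gram:
  fixes v :: "'i \<Rightarrow> 'a::real_inner"
  assumes I: "finite I" and gram: "\<And>i j. i \<in> I \<Longrightarrow> j \<in> I \<Longrightarrow> v i \<bullet> v j = (if i = j then a else b)"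
    and b: "0 \<le> b" "b < a"
  shows "inj_on v I" "independent (v ` I)"
proof -
  show inj: "inj_on v I"
  proof (rule inj_onI)
    fix i j assume "i \<in> I" "j \<in> I" "v i = v j"
    then show "i = j" using gram[of i i] gram[of i j] b by (auto split: if_splits)
  qed
  show "independent (v ` I)"
  proof
    assume "dependent (v ` I)"
    then obtain k where k: "\<exists>w\<in>v ` I. k w \<noteq> 0" "(\<Sum>w\<in>v ` I. k w *\<^sub>R w) = 0"
      using dependent_finite[of "v ` I"] I by blast
    define \<mu> where "\<mu> i = k (v i)" for i
    define L where "L = (\<Sum>i\<in>I. \<mu> i)"
    have sum0: "(\<Sum>i\<in>I. \<mu> i *\<^sub>R v i) = 0" using k(2) inj by (simp add: sum.reindex \<mu>_def)
    have \<mu>j: "(a - b) * \<mu> j = - b * L" if "j \<in> I" for j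
    proof -
      have "0 = v j \<bullet> (\<Sum>i\<in>I. \<mu> i *\<^sub>R v i)" using sum0 by simp
      also have "\<dots> = (\<Sum>i\<in>I. \<mu> i * (v i \<bullet> v j))" by (simp add: inner_sum_right inner_commute)
      also have "\<dots> = (\<Sum>i\<in>I. b * \<mu> i + (if i = j then (a - b) * \<mu> i else 0))"
        by (rule sum.cong) (auto simp: gram that algebra_simps)
      also have "\<dots> = b * L + (a - b) * \<mu> j"
        using I that by (simp add: sum.distrib L_def sum_distrib_left)
      finally show ?thesis by simp
    qed
    have "(a - b) * L = (\<Sum>i\<in>I. (a - b) * \<mu> i)" by (simp add: L_def sum_distrib_left)
    also have "\<dots> = - (real (card I) * b * L)" using \<mu>j by simp
    finally have "(a - b + real (card I) * b) * L = 0" by (simp add: algebra_simps)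
    moreover have "a - b + real (card I) * b > 0" using b by (simp add: add_pos_nonneg)
    ultimately have "L = 0" by simp
    then have "\<forall>i\<in>I. \<mu> i = 0" using \<mu>j b by simp
    then show False using k(1) by (auto simp: \<mu>_def)
  qed
qed

section \<open>Generalized balls\<close>

text \<open>A d-ball is the sublevel set \<open>q \<le> 0\<close> of a form \<open>q x = \<alpha> |x|\<^sup>2 - 2 \<beta> \<bullet> x + \<gamma>\<close> with positive
  discriminant \<open>\<beta> \<bullet> \<beta> - \<alpha> \<gamma>\<close>, the point \<open>\<infinity>\<close> (\<open>None\<close>) belonging to it iff \<open>\<alpha> \<le> 0\<close>: balls for
  \<open>\<alpha> > 0\<close>, complements of balls for \<open>\<alpha> < 0\<close>, half-spaces for \<open>\<alpha> = 0\<close>. Inversions and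
  reflections act on these forms.\<close>

definition quadric :: "real \<Rightarrow> real^'n \<Rightarrow> real \<Rightarrow> real^'n \<Rightarrow> real" where
  "quadric \<alpha> \<beta> \<gamma> x = \<alpha> * (x \<bullet> x) - 2 * (\<beta> \<bullet> x) + \<gamma>"

definition gball_set :: "real \<Rightarrow> real^'n \<Rightarrow> real \<Rightarrow> (real^'n) option set" where
  "gball_set \<alpha> \<beta> \<gamma> = Some ` {x. quadric \<alpha> \<beta> \<gamma> x \<le> 0} \<union> (if \<alpha> \<le> 0 then {None} else {})"

definition gball_interior :: "real \<Rightarrow> real^'n \<Rightarrow> real \<Rightarrow> (real^'n) option set" where
  "gball_interior \<alpha> \<beta> \<gamma> = Some ` {x. quadric \<alpha> \<beta> \<gamma> x < 0} \<union> (if \<alpha> < 0 then {None} else {})"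

lemma mem_gball_set [simp]:
  "Some x \<in> gball_set \<alpha> \<beta> \<gamma> \<longleftrightarrow> quadric \<alpha> \<beta> \<gamma> x \<le> 0" "None \<in> gball_set \<alpha> \<beta> \<gamma> \<longleftrightarrow> \<alpha> \<le> 0"
  by (auto simp: gball_set_def)

lemma mem_gball_interior [simp]:
  "Some x \<in> gball_interior \<alpha> \<beta> \<gamma> \<longleftrightarrow> quadric \<alpha> \<beta> \<gamma> x < 0" "None \<in> gball_interior \<alpha> \<beta> \<gamma> \<longleftrightarrow> \<alpha> < 0"
  by (auto simp: gball_interior_def)

lemma quadric_complete_square:
  assumes "\<alpha> \<noteq> 0"
  shows "quadric \<alpha> \<beta> \<gamma> x = \<alpha> * ((norm (x - (1/\<alpha>) *\<^sub>R \<beta>))\<^sup>2 - (\<beta> \<bullet> \<beta> - \<alpha> * \<gamma>) / \<alpha>\<^sup>2)"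
proof -
  have "(norm (x - (1/\<alpha>) *\<^sub>R \<beta>))\<^sup>2 = x \<bullet> x - 2 * (\<beta> \<bullet> x) / \<alpha> + (\<beta> \<bullet> \<beta>) / \<alpha>\<^sup>2"
    using assms by (simp only: power2_norm_eq_inner)
      (simp add: inner_diff_left inner_diff_right inner_commute field_simps power2_eq_square)
  then show ?thesis
    using assms by (simp only: quadric_def) (simp add: field_simps power2_eq_square)
qed

lemma dball_eq_gball:
  assumes "dball_wf (b :: 'n::finite dball)"
  obtains \<alpha> \<beta> \<gamma> where "dset b = gball_set \<alpha> \<beta> \<gamma>" "dint b = gball_interior \<alpha> \<beta> \<gamma>" "\<alpha> * \<gamma> < \<beta> \<bullet> \<beta>"
proof (cases b)
  case (Ball c r)
  have q: "quadric 1 c (c \<bullet> c - r\<^sup>2) x = (dist c x)\<^sup>2 - r\<^sup>2" for x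
    by (simp add: quadric_def dist_norm power2_norm_eq_inner algebra_simps inner_commute)
  have "r > 0" using assms Ball by simp
  with q show ?thesis
    by (intro that[of 1 c "c \<bullet> c - r\<^sup>2"]) (auto simp: Ball gball_set_def gball_interior_def power_mono_iff power2_less_iff_nonneg)
next
  case (CoBall c r)
  have q: "quadric (-1) (-c) (r\<^sup>2 - c \<bullet> c) x = r\<^sup>2 - (dist c x)\<^sup>2" for x
    by (simp add: quadric_def dist_norm power2_norm_eq_inner algebra_simps inner_commute)
  have "r > 0" using assms CoBall by simp
  with q show ?thesis
    by (intro that[of "-1" "-c" "r\<^sup>2 - c \<bullet> c"]) (auto simp: CoBall gball_set_def gball_interior_def power_mono_iff power2_less_iff_nonneg)
next
  case (Half u a)
  have "u \<noteq> 0" using assms Half by simp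
  then show ?thesis
    by (intro that[of 0 "-(1/2) *\<^sub>R u" "-a"]) (auto simp: Half gball_set_def gball_interior_def quadric_def)
qed

lemma gball_eq_dball:
  assumes "\<alpha> * \<gamma> < \<beta> \<bullet> \<beta>"
  obtains b :: "'n::finite dball"
  where "dball_wf b" "dset b = gball_set \<alpha> \<beta> \<gamma>" "dint b = gball_interior \<alpha> \<beta> \<gamma>"
proof -
  define R where "R = sqrt (\<beta> \<bullet> \<beta> - \<alpha> * \<gamma>) / \<bar>\<alpha>\<bar>"
  define c where "c = (1/\<alpha>) *\<^sub>R \<beta>"
  have q: "quadric \<alpha> \<beta> \<gamma> x = \<alpha> * ((dist c x)\<^sup>2 - R\<^sup>2)" if "\<alpha> \<noteq> 0" for x
    using quadric_complete_square[OF that] assms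
    by (simp add: R_def c_def dist_norm norm_minus_commute power_divide)
  consider "\<alpha> > 0" | "\<alpha> < 0" | "\<alpha> = 0" by linarith
  then show ?thesis
  proof cases
    case 1
    then have "R > 0" using assms by (simp add: R_def)
    with 1 show ?thesis
      by (intro that[of "Ball c R"])
        (auto simp: gball_set_def gball_interior_def q mult_le_0_iff mult_less_0_iff power_mono_iff power2_less_iff_nonneg)
  next
    case 2
    then have "R > 0" using assms by (simp add: R_def divide_pos_neg)
    with 2 show ?thesis
      by (intro that[of "CoBall c R"])
        (auto simp: gball_set_def gball_interior_def q mult_le_0_iff mult_less_0_iff power_mono_iff power2_less_iff_nonneg not_le)
  next
    case 3
    then show ?thesis using assms
      by (intro that[of "Half (-2 *\<^sub>R \<beta>) (-\<gamma>)"]) (auto simp: gball_set_def gball_interior_def quadric_def)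
  qed
qed

section \<open>Moebius transformations act on d-balls\<close>

lemma sphere_inversion_involution:
  assumes "r > 0"
  shows "sphere_inversion c r (sphere_inversion c r p) = p"
proof (cases p)
  case (Some x)
  show ?thesis
  proof (cases "x = c")
    case False
    define t where "t = r\<^sup>2 / (norm (x - c))\<^sup>2"
    have t: "t > 0" using False assms by (simp add: t_def)
    have "r\<^sup>2 / (norm (t *\<^sub>R (x - c)))\<^sup>2 * t = 1"
      using t False assms by (simp add: t_def power_mult_distrib power2_eq_square)
    then show ?thesis
      using Some False t assms by (simp add: t_def[symmetric])
  qed (use Some in simp)
qed simp

lemma hyperplane_reflection_involution:
  assumes "u \<noteq> 0"
  shows "hyperplane_reflection u a (hyperplane_reflection u a p) = p"
proof (cases p)
  case (Some x)
  define s where "s = 2 * (u \<bullet> x - a) / (u \<bullet> u)"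
  have "u \<bullet> u \<noteq> 0" using assms by simp
  then have "2 * (u \<bullet> (x - s *\<^sub>R u) - a) / (u \<bullet> u) = - s"
    by (simp add: s_def inner_diff_right field_simps)
  then show ?thesis using Some by (simp only: hyperplane_reflection.simps s_def[symmetric]) simp
qed simp

text \<open>Inverting in the sphere of radius \<open>r\<close> about \<open>c\<close> turns the form \<open>q\<close> into
  \<open>q(c) |y - c|\<^sup>2 - 2 r\<^sup>2 (\<beta> - \<alpha> c) \<bullet> (y - c) + r\<^sup>4 \<alpha>\<close>, whose value at the image of \<open>x\<close>
  is \<open>r\<^sup>4 q(x) / |x - c|\<^sup>2\<close>; the discriminant gets multiplied by \<open>r\<^sup>4\<close>.\<close>

lemma quadric_sphere_inversion:
  fixes \<alpha> \<gamma> r :: real and \<beta> c :: "real^'n"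
  defines "\<alpha>' \<equiv> quadric \<alpha> \<beta> \<gamma> c"
    and "\<beta>' \<equiv> quadric \<alpha> \<beta> \<gamma> c *\<^sub>R c + r\<^sup>2 *\<^sub>R (\<beta> - \<alpha> *\<^sub>R c)"
    and "\<gamma>' \<equiv> quadric \<alpha> \<beta> \<gamma> c * (c \<bullet> c) + 2 * r\<^sup>2 * ((\<beta> - \<alpha> *\<^sub>R c) \<bullet> c) + r^4 * \<alpha>"
  shows "quadric \<alpha>' \<beta>' \<gamma>' c = r^4 * \<alpha>"
    and "x \<noteq> c \<Longrightarrow> quadric \<alpha>' \<beta>' \<gamma>' (c + (r\<^sup>2 / (norm (x - c))\<^sup>2) *\<^sub>R (x - c))
      = (r^4 / ((x - c) \<bullet> (x - c))) * quadric \<alpha> \<beta> \<gamma> x"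
    and "\<beta>' \<bullet> \<beta>' - \<alpha>' * \<gamma>' = r^4 * (\<beta> \<bullet> \<beta> - \<alpha> * \<gamma>)"
proof -
  define \<delta> where "\<delta> = \<beta> - \<alpha> *\<^sub>R c"
  have q': "quadric \<alpha>' \<beta>' \<gamma>' y = \<alpha>' * ((y - c) \<bullet> (y - c)) - 2 * r\<^sup>2 * (\<delta> \<bullet> (y - c)) + r^4 * \<alpha>" for y
    unfolding \<beta>'_def \<gamma>'_def quadric_def[of \<alpha>'] \<alpha>'_def[symmetric] \<delta>_def[symmetric]
    by (simp add: inner_diff_left inner_diff_right inner_add_left inner_commute algebra_simps)
  then show "quadric \<alpha>' \<beta>' \<gamma>' c = r^4 * \<alpha>" by simp
  have q_shift: "quadric \<alpha> \<beta> \<gamma> x = \<alpha> * ((x - c) \<bullet> (x - c)) - 2 * (\<delta> \<bullet> (x - c)) + \<alpha>'" for x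
    by (simp add: \<alpha>'_def \<delta>_def quadric_def inner_diff_left inner_diff_right inner_commute algebra_simps)
  show "quadric \<alpha>' \<beta>' \<gamma>' (c + (r\<^sup>2 / (norm (x - c))\<^sup>2) *\<^sub>R (x - c))
      = (r^4 / ((x - c) \<bullet> (x - c))) * quadric \<alpha> \<beta> \<gamma> x" if "x \<noteq> c"
  proof -
    define n where "n = (x - c) \<bullet> (x - c)"
    have n: "n > 0" using that by (simp add: n_def)
    have "quadric \<alpha>' \<beta>' \<gamma>' (c + (r\<^sup>2 / n) *\<^sub>R (x - c))
        = \<alpha>' * (r\<^sup>2 / n)\<^sup>2 * n - 2 * r\<^sup>2 * (r\<^sup>2 / n) * (\<delta> \<bullet> (x - c)) + r^4 * \<alpha>"
      by (simp add: q' n_def power2_eq_square)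
    also have "\<dots> = (r^4 / n) * quadric \<alpha> \<beta> \<gamma> x"
      using n by (simp add: q_shift n_def[symmetric] field_simps power2_eq_square eval_nat_numeral)
    finally show ?thesis by (simp add: n_def power2_norm_eq_inner)
  qed
  show "\<beta>' \<bullet> \<beta>' - \<alpha>' * \<gamma>' = r^4 * (\<beta> \<bullet> \<beta> - \<alpha> * \<gamma>)"
    unfolding \<alpha>'_def \<beta>'_def \<gamma>'_def quadric_def
    by (simp add: inner_diff_left inner_diff_right inner_add_left inner_add_right inner_commute
        algebra_simps power2_eq_square eval_nat_numeral)
qed

lemma sphere_inversion_gball:
  assumes "r > 0" and disc: "\<alpha> * \<gamma> < \<beta> \<bullet> \<beta>"
  obtains \<alpha>' \<beta>' \<gamma>' where
    "sphere_inversion c r ` gball_set \<alpha> \<beta> \<gamma> = gball_set \<alpha>' \<beta>' \<gamma>'"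
    "sphere_inversion c r ` gball_interior \<alpha> \<beta> \<gamma> = gball_interior \<alpha>' \<beta>' \<gamma>'"
    "\<alpha>' * \<gamma>' < \<beta>' \<bullet> \<beta>'"
proof -
  define \<alpha>' where "\<alpha>' = quadric \<alpha> \<beta> \<gamma> c"
  define \<beta>' where "\<beta>' = quadric \<alpha> \<beta> \<gamma> c *\<^sub>R c + r\<^sup>2 *\<^sub>R (\<beta> - \<alpha> *\<^sub>R c)"
  define \<gamma>' where "\<gamma>' = quadric \<alpha> \<beta> \<gamma> c * (c \<bullet> c) + 2 * r\<^sup>2 * ((\<beta> - \<alpha> *\<^sub>R c) \<bullet> c) + r^4 * \<alpha>"
  note q = quadric_sphere_inversion[where \<alpha> = \<alpha> and \<beta> = \<beta> and \<gamma> = \<gamma> and c = c and r = r, folded \<beta>'_def \<gamma>'_def, folded \<alpha>'_def]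
  have r4: "r^4 > 0" using assms by simp
  have mem: "(sphere_inversion c r p \<in> gball_set \<alpha>' \<beta>' \<gamma>' \<longleftrightarrow> p \<in> gball_set \<alpha> \<beta> \<gamma>)
    \<and> (sphere_inversion c r p \<in> gball_interior \<alpha>' \<beta>' \<gamma>' \<longleftrightarrow> p \<in> gball_interior \<alpha> \<beta> \<gamma>)" for p
  proof (cases p)
    case None
    then show ?thesis using r4 by (simp add: q(1) mult_le_0_iff mult_less_0_iff)
  next
    case (Some x)
    show ?thesis
    proof (cases "x = c")
      case False
      define K where "K = r^4 / ((x - c) \<bullet> (x - c))"
      have "K > 0" using False r4 by (simp add: K_def)
      then show ?thesis
        using Some False q(2)[OF False] by (simp add: K_def[symmetric] mult_le_0_iff mult_less_0_iff)
    qed (simp add: Some \<alpha>'_def)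
  qed
  have "0 < r^4 * (\<beta> \<bullet> \<beta> - \<alpha> * \<gamma>)" using disc r4 by simp
  then have "\<alpha>' * \<gamma>' < \<beta>' \<bullet> \<beta>'" using q(3) by linarith
  with mem sphere_inversion_involution[OF assms(1)] show ?thesis
    by (intro that[of \<alpha>' \<beta>' \<gamma>'] image_eq_of_involution) auto
qed

lemma hyperplane_reflection_gball:
  assumes "u \<noteq> 0"
  obtains \<beta>' \<gamma>' where
    "hyperplane_reflection u a ` gball_set \<alpha> \<beta> \<gamma> = gball_set \<alpha> \<beta>' \<gamma>'"
    "hyperplane_reflection u a ` gball_interior \<alpha> \<beta> \<gamma> = gball_interior \<alpha> \<beta>' \<gamma>'"
    "\<beta>' \<bullet> \<beta>' - \<alpha> * \<gamma>' = \<beta> \<bullet> \<beta> - \<alpha> * \<gamma>"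
proof -
  define t where "t = 2 / (u \<bullet> u)"
  define \<beta>' where "\<beta>' = (\<alpha> * t * a) *\<^sub>R u + \<beta> - (t * (u \<bullet> \<beta>)) *\<^sub>R u"
  define \<gamma>' where "\<gamma>' = \<alpha> * (t * a)\<^sup>2 * (u \<bullet> u) - 2 * t * a * (\<beta> \<bullet> u) + \<gamma>"
  have uu: "u \<bullet> u \<noteq> 0" using assms by simp
  have q: "quadric \<alpha> \<beta>' \<gamma>' (x - (2 * (u \<bullet> x - a) / (u \<bullet> u)) *\<^sub>R u) = quadric \<alpha> \<beta> \<gamma> x" for x
    unfolding quadric_def \<beta>'_def \<gamma>'_def t_def using uu
    by (simp add: inner_diff_left inner_diff_right inner_add_left inner_add_right inner_commute
        field_simps power2_eq_square)
  have mem: "(hyperplane_reflection u a p \<in> gball_set \<alpha> \<beta>' \<gamma>' \<longleftrightarrow> p \<in> gball_set \<alpha> \<beta> \<gamma>)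
    \<and> (hyperplane_reflection u a p \<in> gball_interior \<alpha> \<beta>' \<gamma>' \<longleftrightarrow> p \<in> gball_interior \<alpha> \<beta> \<gamma>)" for p
    by (induction p) (simp_all only: hyperplane_reflection.simps mem_gball_set mem_gball_interior q)
  have "\<beta>' \<bullet> \<beta>' - \<alpha> * \<gamma>' = \<beta> \<bullet> \<beta> - \<alpha> * \<gamma>"
    unfolding \<beta>'_def \<gamma>'_def t_def using uu
    by (simp add: inner_diff_left inner_diff_right inner_add_left inner_add_right inner_commute
        field_simps power2_eq_square)
  with mem hyperplane_reflection_involution[OF assms] show ?thesis
    by (intro that[of \<beta>' \<gamma>'] image_eq_of_involution) auto
qed

lemma sphere_inversion_moebius: "r > 0 \<Longrightarrow> sphere_inversion c r \<in> moebius"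
  using moebius.moeb_inv[OF moebius.moeb_id] by simp

lemma hyperplane_reflection_moebius: "u \<noteq> 0 \<Longrightarrow> hyperplane_reflection u a \<in> moebius"
  using moebius.moeb_refl[OF moebius.moeb_id] by simp

lemma moebius_comp: "g \<in> moebius \<Longrightarrow> f \<in> moebius \<Longrightarrow> g \<circ> f \<in> moebius"
proof (induction g rule: moebius.induct)
  case (moeb_inv g r c)
  then show ?case using moebius.moeb_inv[of "g \<circ> f" r c] by (metis comp_assoc)
next
  case (moeb_refl g u a)
  then show ?case using moebius.moeb_refl[of "g \<circ> f" u a] by (metis comp_assoc)
qed simp

lemma moebius_inverse:
  assumes "f \<in> moebius"
  obtains g where "g \<in> moebius" "\<And>p. g (f p) = p" "\<And>p. f (g p) = p"
  using assms
proof (induction f arbitrary: thesis rule: moebius.induct)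
  case moeb_id
  show ?case using moeb_id.prems[OF moebius.moeb_id] by simp
next
  case (moeb_inv f r c)
  obtain g where g: "g \<in> moebius" "\<And>p. g (f p) = p" "\<And>p. f (g p) = p" using moeb_inv.IH by blast
  show ?case
  proof (rule moeb_inv.prems)
    show "g \<circ> sphere_inversion c r \<in> moebius"
      using g(1) moeb_inv.hyps(2) by (simp add: moebius_comp sphere_inversion_moebius)
  qed (simp_all add: g(2,3) sphere_inversion_involution[OF moeb_inv.hyps(2)])
next
  case (moeb_refl f u a)
  obtain g where g: "g \<in> moebius" "\<And>p. g (f p) = p" "\<And>p. f (g p) = p" using moeb_refl.IH by blast
  show ?case
  proof (rule moeb_refl.prems)
    show "g \<circ> hyperplane_reflection u a \<in> moebius"
      using g(1) moeb_refl.hyps(2) by (simp add: moebius_comp hyperplane_reflection_moebius)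
  qed (simp_all add: g(2,3) hyperplane_reflection_involution[OF moeb_refl.hyps(2)])
qed

lemma inj_moebius: "f \<in> moebius \<Longrightarrow> inj f"
  by (metis injI moebius_inverse)

lemma moebius_image_gball:
  assumes "f \<in> moebius" and "\<alpha> * \<gamma> < \<beta> \<bullet> \<beta>"
  obtains \<alpha>' \<beta>' \<gamma>' where "f ` gball_set \<alpha> \<beta> \<gamma> = gball_set \<alpha>' \<beta>' \<gamma>'"
    "f ` gball_interior \<alpha> \<beta> \<gamma> = gball_interior \<alpha>' \<beta>' \<gamma>'" "\<alpha>' * \<gamma>' < \<beta>' \<bullet> \<beta>'"
  using assms(1)
proof (induction f arbitrary: thesis rule: moebius.induct)
  case moeb_id
  then show ?case using assms(2) by simp
next
  case (moeb_inv f r c)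
  obtain \<alpha>' \<beta>' \<gamma>' where "f ` gball_set \<alpha> \<beta> \<gamma> = gball_set \<alpha>' \<beta>' \<gamma>'"
    "f ` gball_interior \<alpha> \<beta> \<gamma> = gball_interior \<alpha>' \<beta>' \<gamma>'" "\<alpha>' * \<gamma>' < \<beta>' \<bullet> \<beta>'"
    using moeb_inv.IH by blast
  with sphere_inversion_gball[OF moeb_inv.hyps(2), of \<alpha>' \<gamma>' \<beta>' c] moeb_inv.prems show ?case
    by (metis image_comp)
next
  case (moeb_refl f u a)
  obtain \<alpha>' \<beta>' \<gamma>' where "f ` gball_set \<alpha> \<beta> \<gamma> = gball_set \<alpha>' \<beta>' \<gamma>'"
    "f ` gball_interior \<alpha> \<beta> \<gamma> = gball_interior \<alpha>' \<beta>' \<gamma>'" "\<alpha>' * \<gamma>' < \<beta>' \<bullet> \<beta>'"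
    using moeb_refl.IH by blast
  with hyperplane_reflection_gball[OF moeb_refl.hyps(2), of a \<alpha>' \<beta>' \<gamma>'] moeb_refl.prems show ?case
    by (metis image_comp diff_gt_0_iff_gt)
qed

lemma moebius_image_dball:
  assumes "f \<in> moebius" and "dball_wf b"
  obtains b' where "dball_wf b'" "f ` dset b = dset b'" "f ` dint b = dint b'"
proof -
  obtain \<alpha> \<beta> \<gamma> where "dset b = gball_set \<alpha> \<beta> \<gamma>" "dint b = gball_interior \<alpha> \<beta> \<gamma>" "\<alpha> * \<gamma> < \<beta> \<bullet> \<beta>"
    using dball_eq_gball[OF assms(2)] .
  with moebius_image_gball[OF assms(1)] gball_eq_dball that show ?thesis by metis
qed

text \<open>The constructor data of a d-ball are not unique (half-spaces can be rescaled), but its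
  interior is determined by its point set.\<close>

lemma dint_eq_interior:
  assumes "dball_wf (b :: 'n::finite dball)"
  shows "dint b = Some ` interior {x. Some x \<in> dset b}
    \<union> (if None \<in> dset b \<and> bounded (- {x. Some x \<in> dset b}) then {None} else {})"
proof (cases b)
  case (Ball c r)
  then have "{x. Some x \<in> dset b} = cball c r" by auto
  then show ?thesis using Ball by simp
next
  case (CoBall c r)
  then have "{x. Some x \<in> dset b} = - ball c r" "r > 0" using assms by auto
  then show ?thesis using CoBall by (simp add: interior_complement)
next
  case (Half u a)
  then have "{x. Some x \<in> dset b} = {x. u \<bullet> x \<le> a}" "- {x. u \<bullet> x \<le> a} = {x. a < u \<bullet> x}"
    by auto
  then show ?thesis using Half assms unbounded_halfspace_gt[of u a] by simp
qed

lemma dint_determined: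
  "dball_wf b \<Longrightarrow> dball_wf b' \<Longrightarrow> dset b = dset b' \<Longrightarrow> dint b = dint b'"
  by (simp add: dint_eq_interior)

lemma moebius_image_dint:
  assumes "f \<in> moebius" "dball_wf b" "dball_wf b'" "f ` dset b = dset b'"
  shows "f ` dint b = dint b'"
  using moebius_image_dball[OF assms(1,2)] dint_determined assms(3,4) by metis

section \<open>Kissing balls\<close>

definition kissing :: "('n::finite) dball \<Rightarrow> 'n dball \<Rightarrow> bool" where
  "kissing b b' \<longleftrightarrow> tangent b b' \<and> dint b \<inter> dint b' = {}"

lemma moebius_tangent_iff:
  assumes "inj f" "f ` dset b1 = dset b1'" "f ` dset b2 = dset b2'"
  shows "tangent b1' b2' \<longleftrightarrow> tangent b1 b2"
proof -
  have "dset b1' \<inter> dset b2' = f ` (dset b1 \<inter> dset b2)"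
    using assms by (simp add: image_Int)
  then show ?thesis
    using inj_image_singleton_iff[OF assms(1)] by (simp add: tangent_def)
qed

lemma moebius_disjoint_iff:
  assumes "f \<in> moebius" "\<forall>b\<in>{b1, b2, b1', b2'}. dball_wf b"
    "f ` dset b1 = dset b1'" "f ` dset b2 = dset b2'"
  shows "dint b1' \<inter> dint b2' = {} \<longleftrightarrow> dint b1 \<inter> dint b2 = {}"
proof -
  have "f ` dint b1 = dint b1'" "f ` dint b2 = dint b2'"
    using assms moebius_image_dint[OF assms(1)] by auto
  then have "dint b1' \<inter> dint b2' = f ` (dint b1 \<inter> dint b2)"
    by (simp add: image_Int[OF inj_moebius[OF assms(1)]])
  then show ?thesis by simp
qed

lemma moebius_kissing_iff:
  assumes "f \<in> moebius" "\<forall>b\<in>{b1, b2, b1', b2'}. dball_wf b"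
    "f ` dset b1 = dset b1'" "f ` dset b2 = dset b2'"
  shows "kissing b1' b2' \<longleftrightarrow> kissing b1 b2"
  using moebius_disjoint_iff[OF assms] moebius_tangent_iff[OF inj_moebius[OF assms(1)] assms(3,4)]
  by (simp add: kissing_def)

section \<open>Normal form of a pair of kissing balls\<close>

lemma disjoint_halfspaces_opposite:
  fixes u v :: "real^'n::finite"
  assumes u: "u \<noteq> 0" and v: "v \<noteq> 0" and disj: "dint (Half u a) \<inter> dint (Half v b) = {}"
  obtains \<mu> where "\<mu> > 0" "v = - \<mu> *\<^sub>R u"
proof (rule ccontr)
  assume not_opposite: "\<not> thesis"
  have nu: "norm u > 0" and nv: "norm v > 0" using u v by auto
  have "(-u) \<bullet> v \<noteq> norm (-u) * norm v"
  proof
    assume "(-u) \<bullet> v = norm (-u) * norm v"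
    then have "norm u *\<^sub>R v = - (norm v *\<^sub>R u)" using norm_cauchy_schwarz_eq[of "-u" v] by simp
    then have "(1 / norm u) *\<^sub>R (norm u *\<^sub>R v) = (1 / norm u) *\<^sub>R (- (norm v *\<^sub>R u))" by simp
    then have "v = - (norm v / norm u) *\<^sub>R u" using nu by simp
    then show False using not_opposite that[of "norm v / norm u"] nu nv by simp
  qed
  then have strict: "- (norm u * norm v) < u \<bullet> v" using norm_cauchy_schwarz[of "-u" v] by simp
  define e where "e = (1 / norm u) *\<^sub>R u + (1 / norm v) *\<^sub>R v"
  have ue: "u \<bullet> e > 0"
  proof -
    have "u \<bullet> e = (norm u * norm v + u \<bullet> v) / norm v"
      using nu nv by (simp add: e_def inner_add_right power2_norm_eq_inner[symmetric] field_simps power2_eq_square)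
    then show ?thesis using strict nv by simp
  qed
  have ve: "v \<bullet> e > 0"
  proof -
    have "v \<bullet> e = (norm u * norm v + u \<bullet> v) / norm u"
      using nu nv by (simp add: e_def inner_add_right inner_commute power2_norm_eq_inner[symmetric]
          field_simps power2_eq_square)
    then show ?thesis using strict nu by simp
  qed
  define t where "t = (\<bar>a\<bar> + 1) / (u \<bullet> e) + (\<bar>b\<bar> + 1) / (v \<bullet> e)"
  have "t * (u \<bullet> e) = \<bar>a\<bar> + 1 + (\<bar>b\<bar> + 1) * (u \<bullet> e) / (v \<bullet> e)"
    "t * (v \<bullet> e) = \<bar>b\<bar> + 1 + (\<bar>a\<bar> + 1) * (v \<bullet> e) / (u \<bullet> e)"
    using ue ve by (simp_all add: t_def field_simps)
  moreover have "0 \<le> (\<bar>b\<bar> + 1) * (u \<bullet> e) / (v \<bullet> e)" "0 \<le> (\<bar>a\<bar> + 1) * (v \<bullet> e) / (u \<bullet> e)"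
    using ue ve by simp_all
  ultimately have "\<bar>a\<bar> + 1 \<le> t * (u \<bullet> e)" "\<bar>b\<bar> + 1 \<le> t * (v \<bullet> e)" by auto
  then have "Some (- t *\<^sub>R e) \<in> dint (Half u a) \<inter> dint (Half v b)" by simp
  then show False using disj by blast
qed

lemma coball_halfspace_interiors_meet:
  fixes u :: "real^'n::finite"
  assumes "r > 0" and "u \<noteq> 0"
  shows "dint (CoBall c r) \<inter> dint (Half u a) \<noteq> {}"
proof -
  define K where "K = \<bar>u \<bullet> c\<bar> + \<bar>a\<bar> + r * norm u + 1"
  define x where "x = c - (K / (u \<bullet> u)) *\<^sub>R u"
  have nu: "norm u > 0" using assms by simp
  have "K > 0" unfolding K_def using assms by (smt (verit) abs_ge_zero mult_nonneg_nonneg norm_ge_zero)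
  have "u \<bullet> x = u \<bullet> c - K" using nu by (simp add: x_def inner_diff_right)
  then have "u \<bullet> x < a" unfolding K_def using assms by (smt (verit) abs_ge_self mult_nonneg_nonneg norm_ge_zero)
  moreover have "norm (x - c) = K / norm u"
    using nu \<open>K > 0\<close> by (simp add: x_def power2_norm_eq_inner[symmetric] power2_eq_square)
  moreover have "r < K / norm u" using nu by (simp add: K_def field_simps)
  ultimately have "Some x \<in> dint (CoBall c r) \<inter> dint (Half u a)"
    by (simp add: dist_norm norm_minus_commute)
  then show ?thesis by blast
qed

lemma kissing_ball_halfspace:
  fixes u :: "real^'n::finite"
  assumes r: "r > 0" and u: "u \<noteq> 0" and kiss: "kissing (Ball c r) (Half u a)"
  shows "u \<bullet> c - r * norm u = a"
proof -
  have nu: "norm u > 0" using u by simp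
  have "dset (Ball c r) \<inter> dset (Half u a) \<noteq> {}" using kiss by (auto simp: kissing_def tangent_def)
  then obtain y where y: "dist c y \<le> r" "u \<bullet> y \<le> a" by auto
  have "- (norm u * norm (y - c)) \<le> u \<bullet> (y - c)" using norm_cauchy_schwarz[of "-u" "y - c"] by simp
  moreover have "norm u * norm (y - c) \<le> norm u * r"
    using y(1) by (intro mult_left_mono) (simp_all add: dist_norm norm_minus_commute)
  ultimately have le: "u \<bullet> c - r * norm u \<le> a" using y(2) by (simp add: inner_diff_right algebra_simps)
  have "\<not> u \<bullet> c - r * norm u < a"
  proof
    assume lt: "u \<bullet> c - r * norm u < a"
    define e where "e = (u \<bullet> c - a) / norm u"
    define s where "s = max 0 ((r + e) / 2)"
    have "e < r" using lt nu by (simp add: e_def field_simps)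
    then have "0 \<le> s" "s < r" "e < s" using r by (simp_all add: s_def less_max_iff_disj)
    moreover have "u \<bullet> c - s * norm u < a"
      using \<open>e < s\<close> nu by (simp add: e_def field_simps)
    ultimately have s: "0 \<le> s" "s < r" "u \<bullet> c - s * norm u < a" by auto
    define x where "x = c - (s / norm u) *\<^sub>R u"
    have "dist c x = s" "u \<bullet> x = u \<bullet> c - s * norm u"
      using nu s(1) by (simp_all add: x_def dist_norm inner_diff_right power2_norm_eq_inner[symmetric]
          power2_eq_square)
    then have "Some x \<in> dint (Ball c r) \<inter> dint (Half u a)" using s by simp
    then show False using kiss by (auto simp: kissing_def)
  qed
  with le show ?thesis by simp
qed

lemma disjoint_balls_dist:
  fixes c c' :: "real^'n::finite"
  assumes r: "r > 0" "r' > 0" and disj: "dint (Ball c r) \<inter> dint (Ball c' r') = {}"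
  shows "r + r' \<le> dist c c'"
proof (rule ccontr)
  assume "\<not> ?thesis"
  then have lt: "dist c c' < r + r'" by simp
  define x where "x = c + (r / (r + r')) *\<^sub>R (c' - c)"
  have "1 - r / (r + r') = r' / (r + r')" using r by (simp add: field_simps)
  moreover have "c' - x = (1 - r / (r + r')) *\<^sub>R (c' - c)" by (simp add: x_def algebra_simps)
  ultimately have "c' - x = (r' / (r + r')) *\<^sub>R (c' - c)" by simp
  then have "dist c x = r / (r + r') * dist c c'" "dist c' x = r' / (r + r') * dist c c'"
    using r by (simp_all add: x_def dist_norm norm_minus_commute)
  moreover have "r / (r + r') * dist c c' < r / (r + r') * (r + r')"
    "r' / (r + r') * dist c c' < r' / (r + r') * (r + r')"
    using lt r by (intro mult_strict_left_mono; simp)+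
  ultimately have "Some x \<in> dint (Ball c r) \<inter> dint (Ball c' r')" using r by simp
  then show False using disj by blast
qed

lemma kissing_balls_dist:
  fixes c c' :: "real^'n::finite"
  assumes "r > 0" "r' > 0" and "kissing (Ball c r) (Ball c' r')"
  shows "dist c c' = r + r'"
proof -
  have "dset (Ball c r) \<inter> dset (Ball c' r') \<noteq> {}" using assms(3) by (auto simp: kissing_def tangent_def)
  then obtain y where "dist c y \<le> r" "dist c' y \<le> r'" by auto
  then have "dist c c' \<le> r + r'" using dist_triangle[of c c' y] by (simp add: dist_commute)
  moreover have "r + r' \<le> dist c c'"
    using assms(3) unfolding kissing_def by (blast intro: disjoint_balls_dist[OF assms(1,2)])
  ultimately show ?thesis by simp
qed

lemma halfspace_rescale:
  assumes "\<mu> > 0"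
  shows "dset (Half (\<mu> *\<^sub>R w) b) = dset (Half w (b / \<mu>))"
  using assms by (auto simp: field_simps mult.commute)

lemma tangent_opposite_halfspaces:
  fixes u :: "real^'n::finite"
  assumes "u \<noteq> 0" and "tangent (Half u a1) (Half (-u) a2)"
  shows "a1 + a2 < 0"
proof (rule ccontr)
  assume "\<not> a1 + a2 < 0"
  moreover have "u \<bullet> ((a1 / (u \<bullet> u)) *\<^sub>R u) = a1" using assms(1) by simp
  ultimately have "{None, Some ((a1 / (u \<bullet> u)) *\<^sub>R u)} \<subseteq> dset (Half u a1) \<inter> dset (Half (-u) a2)"
    by simp
  then show False using assms(2) by (auto simp: tangent_def)
qed

lemma kissing_dballs_through_infinity:
  assumes w: "dball_wf b1" "dball_wf (b2 :: 'n::finite dball)" and kiss: "kissing b1 b2"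
    and inf: "None \<in> dset b1" "None \<in> dset b2"
  obtains u \<rho> m where "norm u = 1" "\<rho> > 0"
    "dset b1 = dset (Half u (m - \<rho>))" "dset b2 = dset (Half (-u) (- (m + \<rho>)))"
proof -
  obtain u a v b where b1: "b1 = Half u a" "u \<noteq> 0" and b2: "b2 = Half v b" "v \<noteq> 0"
  proof (cases b1; cases b2)
    fix c r c' r' assume "b1 = CoBall c r" "b2 = CoBall c' r'"
    then show thesis using kiss by (auto simp: kissing_def)
  next
    fix c r v b assume "b1 = CoBall c r" "b2 = Half v b"
    then show thesis using kiss w coball_halfspace_interiors_meet[of r v c b] by (auto simp: kissing_def)
  next
    fix u a c r assume "b1 = Half u a" "b2 = CoBall c r"
    then show thesis using kiss w coball_halfspace_interiors_meet[of r u c a]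
      by (auto simp: kissing_def Int_commute)
  qed (use inf w that in auto)
  obtain \<mu> where \<mu>: "\<mu> > 0" "v = - \<mu> *\<^sub>R u"
    using disjoint_halfspaces_opposite[OF b1(2) b2(2)] kiss b1 b2 by (auto simp: kissing_def)
  define e where "e = (1 / norm u) *\<^sub>R u"
  define a1 where "a1 = a / norm u"
  define a2 where "a2 = b / (\<mu> * norm u)"
  have "u = norm u *\<^sub>R e" "v = (\<mu> * norm u) *\<^sub>R (- e)" using b1(2) \<mu>(2) by (simp_all add: e_def)
  then have halfs: "dset b1 = dset (Half e a1)" "dset b2 = dset (Half (- e) a2)"
    using b1 b2 \<mu>(1) halfspace_rescale[of "norm u" e a] halfspace_rescale[of "\<mu> * norm u" "- e" b]
    by (simp_all add: a1_def a2_def)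
  have ne: "norm e = 1" using b1(2) by (simp add: e_def)
  have "tangent (Half e a1) (Half (-e) a2)"
    using moebius_tangent_iff[OF inj_on_id, of b1 "Half e a1" b2 "Half (-e) a2"] halfs kiss
    by (simp add: kissing_def)
  moreover have "e \<noteq> 0" using ne by auto
  ultimately have "a1 + a2 < 0" using tangent_opposite_halfspaces by blast
  define m \<rho> where "m = (a1 - a2) / 2" and "\<rho> = - (a1 + a2) / 2"
  then have "\<rho> > 0" "m - \<rho> = a1" "- (m + \<rho>) = a2" using \<open>a1 + a2 < 0\<close> by (simp_all add: field_simps)
  then show ?thesis using that[of e \<rho> m] ne halfs by simp
qed

text \<open>An inversion centred at the point of contact sends two kissing balls to the two
  half-spaces complementary to an open slab.\<close>

lemma moebius_kissing_to_halfspaces: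
  assumes w1: "dball_wf b1" and w2: "dball_wf (b2 :: 'n::finite dball)" and kiss: "kissing b1 b2"
  obtains f u \<rho> m where "f \<in> moebius" "norm u = 1" "\<rho> > 0"
    "f ` dset b1 = dset (Half u (m - \<rho>))" "f ` dset b2 = dset (Half (-u) (- (m + \<rho>)))"
proof -
  obtain p where p: "dset b1 \<inter> dset b2 = {p}" using kiss by (auto simp: kissing_def tangent_def)
  obtain f :: "(real^'n) option \<Rightarrow> (real^'n) option" where f: "f \<in> moebius" "f p = None"
  proof (cases p)
    case None
    then show ?thesis using that[of id] moebius.moeb_id by simp
  next
    case (Some x)
    then show ?thesis using that[of "sphere_inversion x 1"] sphere_inversion_moebius[of 1 x] by simp
  qed
  obtain b1' b2' where b': "dball_wf b1'" "f ` dset b1 = dset b1'" "dball_wf b2'" "f ` dset b2 = dset b2'"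
    using moebius_image_dball[OF f(1) w1] moebius_image_dball[OF f(1) w2] by metis
  have "kissing b1' b2'" using moebius_kissing_iff[OF f(1), of b1 b2 b1' b2'] kiss b' w1 w2 by simp
  moreover have "None \<in> dset b1'" "None \<in> dset b2'"
    using p f(2) b'(2,4) by (metis IntD1 IntD2 image_eqI insertI1)+
  ultimately obtain u \<rho> m where "norm u = 1" "\<rho> > 0"
    "dset b1' = dset (Half u (m - \<rho>))" "dset b2' = dset (Half (-u) (- (m + \<rho>)))"
    using kissing_dballs_through_infinity[OF b'(1,3)] by blast
  with f(1) b'(2,4) show ?thesis using that by simp
qed

lemma ball_between_opposite_halfspaces:
  fixes u :: "real^'n::finite"
  assumes u: "norm u = 1" and w: "dball_wf b"
    and k1: "kissing b (Half u (m - \<rho>))" and k2: "kissing b (Half (-u) (- (m + \<rho>)))"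
  obtains c where "b = Ball c \<rho>" "u \<bullet> c = m"
proof (cases b)
  case (Ball c r)
  have "r > 0" "u \<noteq> 0" using w Ball u by auto
  then have "u \<bullet> c - r = m - \<rho>" "- (u \<bullet> c) - r = - (m + \<rho>)"
    using kissing_ball_halfspace[of r u c] kissing_ball_halfspace[of r "-u" c] k1 k2 Ball u by auto
  then show ?thesis using that Ball by simp
next
  case (CoBall c r)
  have "u \<noteq> 0" using u by auto
  then show ?thesis
    using coball_halfspace_interiors_meet[of r u c] w k1 CoBall by (auto simp: kissing_def)
next
  case (Half w' b')
  have "w' \<noteq> 0" "u \<noteq> 0" "-u \<noteq> 0" using w Half u by auto
  then obtain \<mu> \<mu>' where "\<mu> > 0" "u = - \<mu> *\<^sub>R w'" "\<mu>' > 0" "-u = - \<mu>' *\<^sub>R w'"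
    using disjoint_halfspaces_opposite[of w' u b'] disjoint_halfspaces_opposite[of w' "-u" b'] k1 k2 Half
    by (metis kissing_def)
  then have "(\<mu> + \<mu>') *\<^sub>R w' = 0" by (simp add: algebra_simps)
  with \<open>w' \<noteq> 0\<close> \<open>\<mu> > 0\<close> \<open>\<mu>' > 0\<close> show ?thesis by simp
qed



lemma moebius_kissing_pair_normal_form:
  assumes w1: "dball_wf b1" and w2: "dball_wf (b2 :: 'n::finite dball)" and kiss: "kissing b1 b2"
  obtains f u \<rho> m cen where "f \<in> moebius" "norm u = 1" "\<rho> > 0"
    "f ` dset b1 = dset (Half u (m - \<rho>))" "f ` dset b2 = dset (Half (-u) (- (m + \<rho>)))"
    "\<And>b. dball_wf b \<Longrightarrow> kissing b b1 \<Longrightarrow> kissing b b2 \<Longrightarrow>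
       f ` dset b = dset (Ball (cen b) \<rho>) \<and> u \<bullet> cen b = m"
proof -
  obtain f u \<rho> m where f: "f \<in> moebius" "norm u = 1" "\<rho> > 0"
    "f ` dset b1 = dset (Half u (m - \<rho>))" "f ` dset b2 = dset (Half (-u) (- (m + \<rho>)))"
    using moebius_kissing_to_halfspaces[OF w1 w2 kiss] .
  have centre: "\<exists>c. f ` dset b = dset (Ball c \<rho>) \<and> u \<bullet> c = m"
    if b: "dball_wf b" "kissing b b1" "kissing b b2" for b
  proof -
    obtain b' where b': "dball_wf b'" "f ` dset b = dset b'"
      using moebius_image_dball[OF f(1) b(1)] by metis
    have "u \<noteq> 0" using f(2) by auto
    then have "kissing b' (Half u (m - \<rho>))" "kissing b' (Half (-u) (- (m + \<rho>)))"
      using moebius_kissing_iff[OF f(1)] b' f(4,5) b w1 w2 by simp_all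
    then obtain c where "b' = Ball c \<rho>" "u \<bullet> c = m"
      using ball_between_opposite_halfspaces[OF f(2) b'(1)] by metis
    then show ?thesis using b'(2) by blast
  qed
  define cen where "cen b = (SOME c. f ` dset b = dset (Ball c \<rho>) \<and> u \<bullet> c = m)" for b
  show ?thesis
  proof (rule that[OF f])
    fix b assume "dball_wf b" "kissing b b1" "kissing b b2"
    from someI_ex[OF centre[OF this]]
    show "f ` dset b = dset (Ball (cen b) \<rho>) \<and> u \<bullet> cen b = m" unfolding cen_def .
  qed
qed

lemma moebius_equal_balls_dist:
  assumes f: "f \<in> moebius" and w: "dball_wf b" "dball_wf b'" and "\<rho> > 0"
    and img: "f ` dset b = dset (Ball c \<rho>)" "f ` dset b' = dset (Ball c' \<rho>)"
  shows "kissing b b' \<Longrightarrow> dist c c' = 2 * \<rho>"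
    and "dint b \<inter> dint b' = {} \<Longrightarrow> 2 * \<rho> \<le> dist c c'"
proof -
  have wf: "\<forall>b\<in>{b, b', Ball c \<rho>, Ball c' \<rho>}. dball_wf b" using w \<open>\<rho> > 0\<close> by simp
  show "kissing b b' \<Longrightarrow> dist c c' = 2 * \<rho>"
    using moebius_kissing_iff[OF f wf img] kissing_balls_dist[OF \<open>\<rho> > 0\<close> \<open>\<rho> > 0\<close>] by simp
  show "dint b \<inter> dint b' = {} \<Longrightarrow> 2 * \<rho> \<le> dist c c'"
    using moebius_disjoint_iff[OF f wf img] disjoint_balls_dist[OF \<open>\<rho> > 0\<close> \<open>\<rho> > 0\<close>] by simp
qed

section \<open>Uniqueness of the completion of kissing balls\<close>

text \<open>In the hyperplane \<open>u \<bullet> p = m\<close> of dimension \<open>d - 1\<close>, the points at distance \<open>2\<rho>\<close> from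
  all vertices of a regular \<open>(d - 2)\<close>-simplex of edge \<open>2\<rho>\<close> form a sphere of dimension 0,
  so there are at most two of them.\<close>

lemma regular_simplex_apex_unique:
  fixes u :: "real^'n::finite" and c :: "'i \<Rightarrow> real^'n"
  assumes u: "u \<noteq> 0" and I: "finite I" "card I + 1 = CARD('n)" and \<rho>: "\<rho> > 0"
    and simplex: "\<forall>i\<in>I. \<forall>j\<in>I. i \<noteq> j \<longrightarrow> dist (c i) (c j) = 2 * \<rho>"
    and plane: "\<forall>p\<in>{x, y, z} \<union> c ` I. u \<bullet> p = m"
    and apex: "\<forall>p\<in>{x, y, z}. \<forall>i\<in>I. dist p (c i) = 2 * \<rho>"
    and "x \<noteq> z" "y \<noteq> z"
  shows "x = y"
proof -
  define v where "v i = c i - z" for i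
  have dist_sq: "(p - z - v i) \<bullet> (p - z - v i) = 4 * \<rho>\<^sup>2" if "p \<in> {x, y, z}" "i \<in> I" for p i
    using apex that by (auto simp: v_def dist_norm power2_norm_eq_inner[symmetric] power_mult_distrib)
  have vv: "v i \<bullet> v i = 4 * \<rho>\<^sup>2" if "i \<in> I" for i
    using dist_sq[of z i] that by simp
  have gram: "v i \<bullet> v j = (if i = j then 4 * \<rho>\<^sup>2 else 2 * \<rho>\<^sup>2)" if "i \<in> I" "j \<in> I" for i j
  proof -
    have "i \<noteq> j \<Longrightarrow> (v i - v j) \<bullet> (v i - v j) = 4 * \<rho>\<^sup>2"
      using simplex that by (simp add: v_def dist_norm power2_norm_eq_inner[symmetric] power_mult_distrib)
    then show ?thesis
      using vv that by (auto simp: inner_diff_left inner_diff_right inner_commute)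
  qed
  have indep: "inj_on v I" "independent (v ` I)"
    using independent_regular_gram[OF I(1) gram] \<rho> by simp_all
  have uv: "u \<bullet> v i = 0" if "i \<in> I" for i
    using plane that by (simp add: v_def inner_diff_right)
  have "u \<notin> span (v ` I)"
    using orthogonal_to_span[of u "v ` I" u] uv u by (auto simp: orthogonal_def)
  moreover from this have "u \<notin> v ` I" by (metis span_base)
  ultimately have "independent (insert u (v ` I))" "card (insert u (v ` I)) = CARD('n)"
    using indep I by (simp_all add: independent_insert card_image)
  then have span: "UNIV \<subseteq> span (insert u (v ` I))"
    using card_ge_dim_independent[of "insert u (v ` I)" UNIV] by simp
  define wx wy where "wx = x - z" and "wy = y - z"
  have wv: "wx \<bullet> v i = (wx \<bullet> wx) / 2" "wy \<bullet> v i = (wy \<bullet> wy) / 2" if "i \<in> I" for i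
    using dist_sq[of x i] dist_sq[of y i] vv[OF that] that
    by (auto simp: wx_def wy_def inner_diff_left inner_diff_right inner_commute)
  define W where "W = (wy \<bullet> wy) *\<^sub>R wx - (wx \<bullet> wx) *\<^sub>R wy"
  have "wx \<bullet> u = 0" "wy \<bullet> u = 0"
    using plane by (simp_all add: wx_def wy_def inner_diff_left inner_diff_right inner_commute)
  then have "orthogonal W t" if "t \<in> insert u (v ` I)" for t
    using that by (auto simp: orthogonal_def W_def inner_diff_left wv)
  then have "orthogonal W W" using orthogonal_to_span span by blast
  then have W: "(wy \<bullet> wy) *\<^sub>R wx = (wx \<bullet> wx) *\<^sub>R wy" by (simp add: W_def orthogonal_self)
  have pos: "wx \<bullet> wx > 0" "wy \<bullet> wy > 0" using \<open>x \<noteq> z\<close> \<open>y \<noteq> z\<close> by (simp_all add: wx_def wy_def)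
  have "(wy \<bullet> wy)\<^sup>2 * (wx \<bullet> wx) = (wx \<bullet> wx)\<^sup>2 * (wy \<bullet> wy)"
    using arg_cong[OF W, of "\<lambda>w. w \<bullet> w"] by (simp add: power2_eq_square algebra_simps)
  then have "wx \<bullet> wx = wy \<bullet> wy" using pos by (simp add: power2_eq_square)
  then have "wx = wy" using W pos by simp
  then show ?thesis by (simp add: wx_def wy_def)
qed

text \<open>After normalising two of the \<open>S i\<close> to half-spaces, \<open>X\<close>, \<open>Y\<close>, \<open>Z\<close> and the other \<open>S i\<close> become
  balls of one radius centred on the middle hyperplane, so the centres of \<open>X\<close>, \<open>Y\<close> and \<open>Z\<close> are
  apexes over the regular simplex formed by the remaining \<open>d - 1\<close> centres.\<close>

lemma kissing_completion_unique:
  fixes S :: "'i \<Rightarrow> 'n::finite dball" and X Y Z :: "'n dball"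
  assumes F: "finite F" "card F = CARD('n) + 1"
    and wS: "\<forall>i\<in>F. dball_wf (S i)" and kS: "\<forall>i\<in>F. \<forall>j\<in>F. i \<noteq> j \<longrightarrow> kissing (S i) (S j)"
    and w: "dball_wf X" "dball_wf Y" "dball_wf Z"
    and kX: "\<forall>i\<in>F. kissing X (S i)" and kY: "\<forall>i\<in>F. kissing Y (S i)" and kZ: "\<forall>i\<in>F. kissing Z (S i)"
    and XZ: "dint X \<inter> dint Z = {}" and YZ: "dint Y \<inter> dint Z = {}"
  shows "dset X = dset Y"
proof -
  obtain T where "T \<subseteq> F" "card T = 2" using obtain_subset_with_card_n[of 2 F] F(2) by auto
  then obtain i1 i2 where i12: "i1 \<in> F" "i2 \<in> F" "i1 \<noteq> i2" by (auto simp: card_2_iff)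
  have pair: "dball_wf (S i1)" "dball_wf (S i2)" "kissing (S i1) (S i2)" using wS kS i12 by auto
  obtain f u \<rho> m cen where f: "f \<in> moebius" "norm u = 1" "\<rho> > 0"
    "f ` dset (S i1) = dset (Half u (m - \<rho>))" "f ` dset (S i2) = dset (Half (-u) (- (m + \<rho>)))"
    and cen: "\<And>b. dball_wf b \<Longrightarrow> kissing b (S i1) \<Longrightarrow> kissing b (S i2) \<Longrightarrow>
       f ` dset b = dset (Ball (cen b) \<rho>) \<and> u \<bullet> cen b = m"
    using moebius_kissing_pair_normal_form[OF pair] by blast
  define I where "I = F - {i1, i2}"
  define good where "good b \<longleftrightarrow> dball_wf b \<and> kissing b (S i1) \<and> kissing b (S i2)" for b
  have good: "good X" "good Y" "good Z" "\<And>i. i \<in> I \<Longrightarrow> good (S i)"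
    using w kX kY kZ i12 wS kS by (auto simp: good_def I_def)
  have img: "f ` dset b = dset (Ball (cen b) \<rho>)" "u \<bullet> cen b = m" if "good b" for b
    using cen that by (auto simp: good_def)
  have kiss_dist: "dist (cen b) (cen b') = 2 * \<rho>" if "good b" "good b'" "kissing b b'" for b b'
    using moebius_equal_balls_dist(1)[OF f(1) _ _ f(3) img(1)[OF that(1)] img(1)[OF that(2)]] that
    by (simp add: good_def)
  have disj_dist: "2 * \<rho> \<le> dist (cen b) (cen b')" if "good b" "good b'" "dint b \<inter> dint b' = {}" for b b'
    using moebius_equal_balls_dist(2)[OF f(1) _ _ f(3) img(1)[OF that(1)] img(1)[OF that(2)]] that
    by (simp add: good_def)
  have "cen X = cen Y"
  proof (rule regular_simplex_apex_unique[of u I \<rho> "\<lambda>i. cen (S i)"])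
    show "u \<noteq> 0" "finite I" "card I + 1 = CARD('n)" "\<rho> > 0"
      using f F i12 by (auto simp: I_def card_Diff_subset)
    show "\<forall>i\<in>I. \<forall>j\<in>I. i \<noteq> j \<longrightarrow> dist (cen (S i)) (cen (S j)) = 2 * \<rho>"
      using kiss_dist good kS by (simp add: I_def)
    show "\<forall>p\<in>{cen X, cen Y, cen Z} \<union> (\<lambda>i. cen (S i)) ` I. u \<bullet> p = m"
      using img(2) good by auto
    show "\<forall>p\<in>{cen X, cen Y, cen Z}. \<forall>i\<in>I. dist p (cen (S i)) = 2 * \<rho>"
      using kiss_dist good kX kY kZ by (simp add: I_def)
    show "cen X \<noteq> cen Z" "cen Y \<noteq> cen Z"
      using disj_dist[OF good(1,3) XZ] disj_dist[OF good(2,3) YZ] f(3) by auto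
  qed
  then have "f ` dset X = f ` dset Y" using img(1) good by simp
  then show ?thesis using inj_moebius[OF f(1)] by (simp add: inj_image_eq_iff)
qed



section \<open>Similarities\<close>

definition moebius_similarity ::
  "((real^'n::finite) option \<Rightarrow> (real^'n) option) \<Rightarrow> real \<Rightarrow> (real^'n \<Rightarrow> real^'n) \<Rightarrow> bool" where
  "moebius_similarity f s h \<longleftrightarrow> f \<in> moebius \<and> f None = None \<and> (\<forall>x. f (Some x) = Some (h x)) \<and>
     surj h \<and> (\<forall>x y. dist (h x) (h y) = s * dist x y)"

lemma moebius_similarity_comp:
  "moebius_similarity f s h \<Longrightarrow> moebius_similarity g t k \<Longrightarrow> moebius_similarity (g \<circ> f) (t * s) (k \<circ> h)"
  unfolding moebius_similarity_def using comp_surj[of h k] moebius_comp[of g f] by (auto simp: comp_def)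

lemma moebius_similarity_homothety:
  assumes k: "k > 0"
  shows "moebius_similarity (sphere_inversion 0 (sqrt k) \<circ> sphere_inversion 0 1) k (\<lambda>x. k *\<^sub>R x)"
proof -
  have "(sphere_inversion 0 (sqrt k) \<circ> sphere_inversion 0 1) (Some x) = Some (k *\<^sub>R x)" for x :: "real^'n"
  proof (cases "x = 0")
    case False
    define y where "y = (1 / (norm x)\<^sup>2) *\<^sub>R x"
    have y: "y \<noteq> 0" "(norm y)\<^sup>2 = 1 / (norm x)\<^sup>2"
      using False by (simp_all add: y_def power2_eq_square)
    have "sphere_inversion 0 1 (Some x) = Some y" using False by (simp add: y_def)
    moreover have "sphere_inversion 0 (sqrt k) (Some y) = Some (k *\<^sub>R x)"
      using y False k by (simp add: y_def)
    ultimately show ?thesis by simp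
  qed simp
  moreover have "surj (\<lambda>x::real^'n. k *\<^sub>R x)"
    by (rule surjI[of _ "\<lambda>x. (1/k) *\<^sub>R x"]) (use k in simp)
  moreover have "dist (k *\<^sub>R x) (k *\<^sub>R y) = k * dist x y" for x y :: "real^'n"
    using k by (simp add: dist_norm scaleR_diff_right[symmetric])
  moreover have "sphere_inversion 0 (sqrt k) \<circ> sphere_inversion 0 1 \<in> moebius"
    using k by (simp add: moebius_comp sphere_inversion_moebius)
  moreover have "(sphere_inversion 0 (sqrt k) \<circ> sphere_inversion 0 1) None = None" by simp
  ultimately show ?thesis unfolding moebius_similarity_def by blast
qed

lemma moebius_similarity_bisector_reflection:
  fixes p q :: "real^'n::finite"
  assumes "p \<noteq> q"
  obtains h where "moebius_similarity (hyperplane_reflection (p - q) ((p \<bullet> p - q \<bullet> q) / 2)) 1 h"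
    "h p = q" "\<And>x. dist x p = dist x q \<Longrightarrow> h x = x"
proof
  define w where "w = p - q"
  define h where "h x = x - (2 * (w \<bullet> x - (p \<bullet> p - q \<bullet> q) / 2) / (w \<bullet> w)) *\<^sub>R w" for x
  have ww: "w \<bullet> w \<noteq> 0" using assms by (simp add: w_def)
  have "h (h x) = x" for x
    using hyperplane_reflection_involution[of w "(p \<bullet> p - q \<bullet> q) / 2" "Some x"] ww by (simp add: h_def)
  then have "surj h" by (metis surjI)
  moreover have "dist (h x) (h y) = dist x y" for x y
  proof -
    define C where "C = (p \<bullet> p - q \<bullet> q) / 2"
    have "h x - h y = (x - y) - (2 * (w \<bullet> x - C) / (w \<bullet> w) - 2 * (w \<bullet> y - C) / (w \<bullet> w)) *\<^sub>R w"
      by (simp add: h_def C_def scaleR_diff_left algebra_simps)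
    also have "2 * (w \<bullet> x - C) / (w \<bullet> w) - 2 * (w \<bullet> y - C) / (w \<bullet> w) = 2 * (w \<bullet> (x - y)) / (w \<bullet> w)"
      by (simp add: diff_divide_distrib[symmetric] inner_diff_right algebra_simps)
    finally have hxy: "h x - h y = (x - y) - (2 * (w \<bullet> (x - y)) / (w \<bullet> w)) *\<^sub>R w" .
    have "(z - (2 * (w \<bullet> z) / (w \<bullet> w)) *\<^sub>R w) \<bullet> (z - (2 * (w \<bullet> z) / (w \<bullet> w)) *\<^sub>R w) = z \<bullet> z" for z
      using ww by (simp add: inner_diff_left inner_diff_right inner_commute field_simps power2_eq_square)
    then show ?thesis by (simp only: dist_norm norm_eq_sqrt_inner hxy)
  qed
  ultimately show "moebius_similarity (hyperplane_reflection (p - q) ((p \<bullet> p - q \<bullet> q) / 2)) 1 h"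
    using ww by (auto simp: moebius_similarity_def hyperplane_reflection_moebius h_def w_def)
  have "2 * (w \<bullet> p - (p \<bullet> p - q \<bullet> q) / 2) = w \<bullet> w"
    by (simp add: w_def inner_diff_left inner_diff_right inner_commute field_simps)
  then show "h p = q" using ww by (simp add: h_def w_def)
  fix x assume "dist x p = dist x q"
  then have "(x - p) \<bullet> (x - p) = (x - q) \<bullet> (x - q)" by (simp add: dist_norm norm_eq_sqrt_inner)
  then have "w \<bullet> x - (p \<bullet> p - q \<bullet> q) / 2 = 0"
    by (simp add: w_def inner_diff_left inner_diff_right inner_commute field_simps)
  then show "h x = x" by (simp add: h_def)
qed

text \<open>Congruent finite point configurations are related by a product of reflections: reflect in
  the bisector of each point and its target in turn, which fixes the points already matched.\<close>

lemma congruent_points_moebius_isometry: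
  fixes P Q :: "'j \<Rightarrow> real^'n::finite"
  assumes "finite J" "\<forall>i\<in>J. \<forall>j\<in>J. dist (Q i) (Q j) = dist (P i) (P j)"
  obtains f h where "moebius_similarity f 1 h" "\<forall>i\<in>J. h (P i) = Q i"
  using assms
proof (induction J arbitrary: thesis rule: finite_induct)
  case empty
  have "moebius_similarity id 1 id" by (simp add: moebius_similarity_def moebius.moeb_id)
  with empty.prems(1) show ?case by blast
next
  case (insert j J)
  have "\<forall>i\<in>J. \<forall>j\<in>J. dist (Q i) (Q j) = dist (P i) (P j)" using insert.prems(2) by simp
  then obtain f h where fh: "moebius_similarity f 1 h" "\<forall>i\<in>J. h (P i) = Q i"
    by (rule insert.IH[rotated])
  show ?case
  proof (cases "h (P j) = Q j")
    case True
    then show ?thesis using insert.prems(1) fh by auto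
  next
    case False
    then obtain g where g: "moebius_similarity (hyperplane_reflection (h (P j) - Q j)
        ((h (P j) \<bullet> h (P j) - Q j \<bullet> Q j) / 2)) 1 g"
      "g (h (P j)) = Q j" "\<And>x. dist x (h (P j)) = dist x (Q j) \<Longrightarrow> g x = x"
      using moebius_similarity_bisector_reflection[OF False] by blast
    have "g (Q i) = Q i" if "i \<in> J" for i
    proof (rule g(3))
      have "dist (Q i) (h (P j)) = dist (h (P i)) (h (P j))" using fh(2) that by simp
      also have "\<dots> = dist (P i) (P j)" using fh(1) by (simp add: moebius_similarity_def)
      finally show "dist (Q i) (h (P j)) = dist (Q i) (Q j)" using insert.prems(2) that by simp
    qed
    then have "\<forall>i\<in>insert j J. (g \<circ> h) (P i) = Q i" using fh(2) g(2) by simp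
    then show ?thesis using insert.prems(1) moebius_similarity_comp[OF fh(1) g(1)] by simp
  qed
qed

lemma similar_points_moebius_similarity:
  fixes P Q :: "'j \<Rightarrow> real^'n::finite"
  assumes k: "k > 0" and J: "finite J" and d: "\<forall>i\<in>J. \<forall>j\<in>J. dist (Q i) (Q j) = k * dist (P i) (P j)"
  obtains f h where "moebius_similarity f k h" "\<forall>i\<in>J. h (P i) = Q i"
proof -
  have "\<forall>i\<in>J. \<forall>j\<in>J. dist (Q i) (Q j) = dist (k *\<^sub>R P i) (k *\<^sub>R P j)"
    using d k by (simp add: dist_norm scaleR_diff_right[symmetric])
  then obtain g h where gh: "moebius_similarity g 1 h" "\<forall>i\<in>J. h (k *\<^sub>R P i) = Q i"
    by (rule congruent_points_moebius_isometry[OF J])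
  have "moebius_similarity (g \<circ> (sphere_inversion 0 (sqrt k) \<circ> sphere_inversion 0 1)) k (h \<circ> (\<lambda>x. k *\<^sub>R x))"
    using moebius_similarity_comp[OF moebius_similarity_homothety[OF k] gh(1)] by simp
  then show ?thesis by (rule that) (use gh(2) in simp)
qed

lemma moebius_similarity_image:
  assumes "moebius_similarity f s h"
  shows "f None = None" "f ` Some ` A = Some ` h ` A"
  using assms by (auto simp: moebius_similarity_def image_image)

lemma moebius_similarity_image_cball:
  assumes "moebius_similarity f s h" "s > 0"
  shows "h ` cball c r = cball (h c) (s * r)"
proof -
  have "h ` {x. s * dist c x \<le> s * r} = {y. dist (h c) y \<le> s * r}"
    using assms(1) unfolding moebius_similarity_def
    by (intro image_Collect_surj[where P = "\<lambda>t. t \<le> s * r"]) auto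
  then show ?thesis using assms(2) by (simp add: cball_def)
qed

lemma moebius_similarity_inner:
  assumes "moebius_similarity f s h"
  shows "(h x - h p) \<bullet> (h q - h p) = s\<^sup>2 * ((x - p) \<bullet> (q - p))"
proof -
  have polar: "a \<bullet> b = ((norm a)\<^sup>2 + (norm b)\<^sup>2 - (norm (a - b))\<^sup>2) / 2" for a b :: "real^'n"
    by (simp add: power2_norm_eq_inner inner_diff_left inner_diff_right inner_commute)
  have "norm (h a - h b) = s * norm (a - b)" for a b
    using assms by (simp add: moebius_similarity_def dist_norm)
  then show ?thesis
    by (simp only: polar[of "h x - h p"] polar[of "x - p"]) (simp add: power_mult_distrib algebra_simps)
qed



lemma moebius_similarity_image_halfspace:
  assumes "moebius_similarity f s h" "s > 0"
  shows "h ` {y. (y - p) \<bullet> (q - p) \<le> K} = {y. (y - h p) \<bullet> (h q - h p) \<le> s\<^sup>2 * K}"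
    and "h ` {y. K \<le> (y - p) \<bullet> (q - p)} = {y. s\<^sup>2 * K \<le> (y - h p) \<bullet> (h q - h p)}"
proof -
  have surj: "surj h" using assms(1) by (simp add: moebius_similarity_def)
  have img: "h ` {x. P (s\<^sup>2 * ((x - p) \<bullet> (q - p)))} = {y. P ((y - h p) \<bullet> (h q - h p))}" for P
    by (rule image_Collect_surj[OF surj, where \<phi> = "\<lambda>x. s\<^sup>2 * ((x - p) \<bullet> (q - p))" and P = P])
      (simp add: moebius_similarity_inner[OF assms(1)])
  show "h ` {y. (y - p) \<bullet> (q - p) \<le> K} = {y. (y - h p) \<bullet> (h q - h p) \<le> s\<^sup>2 * K}"
    using img[of "\<lambda>t. t \<le> s\<^sup>2 * K"] assms(2) by simp
  show "h ` {y. K \<le> (y - p) \<bullet> (q - p)} = {y. s\<^sup>2 * K \<le> (y - h p) \<bullet> (h q - h p)}"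
    using img[of "\<lambda>t. s\<^sup>2 * K \<le> t"] assms(2) by simp
qed

section \<open>Descartes configurations are Moebius equivalent\<close>

lemma dist_contact_point:
  fixes u :: "real^'n::finite"
  assumes "norm u = 1" "u \<bullet> a = u \<bullet> b"
  shows "dist (a - \<rho> *\<^sub>R u) b = sqrt ((dist a b)\<^sup>2 + \<rho>\<^sup>2)"
proof -
  have "u \<bullet> (a - b) = 0" "u \<bullet> u = 1"
    using assms by (simp_all add: inner_diff_right power2_norm_eq_inner[symmetric])
  have "(dist (a - \<rho> *\<^sub>R u) b)\<^sup>2 = ((a - b) - \<rho> *\<^sub>R u) \<bullet> ((a - b) - \<rho> *\<^sub>R u)"
    by (simp add: dist_norm power2_norm_eq_inner algebra_simps)
  also have "\<dots> = (a - b) \<bullet> (a - b) + \<rho>\<^sup>2"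
    using \<open>u \<bullet> (a - b) = 0\<close> \<open>u \<bullet> u = 1\<close>
    by (simp add: inner_diff_left inner_diff_right inner_commute power2_eq_square)
  finally have "(dist (a - \<rho> *\<^sub>R u) b)\<^sup>2 = (dist a b)\<^sup>2 + \<rho>\<^sup>2"
    by (simp add: dist_norm power2_norm_eq_inner)
  then show ?thesis by (simp add: real_sqrt_unique)
qed

text \<open>Seen from the point \<open>c - \<rho> u\<close> where the ball \<open>Ball c \<rho>\<close> touches the lower half-space,
  both half-spaces bounding the slab are level sets of \<open>y \<mapsto> (y - p) \<bullet> (c - p)\<close>;
  this description is preserved by similarities.\<close>

lemma slab_halfspaces_from_contact_point:
  fixes u :: "real^'n::finite"
  assumes u: "norm u = 1" and c: "u \<bullet> c = m" and \<rho>: "\<rho> > 0"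
  defines "p \<equiv> c - \<rho> *\<^sub>R u"
  shows "{x. u \<bullet> x \<le> m - \<rho>} = {y. (y - p) \<bullet> (c - p) \<le> 0}"
    and "{x. (-u) \<bullet> x \<le> - (m + \<rho>)} = {y. 2 * \<rho>\<^sup>2 \<le> (y - p) \<bullet> (c - p)}"
proof -
  have "u \<bullet> u = 1" using u by (simp add: power2_norm_eq_inner[symmetric])
  then have e: "(y - p) \<bullet> (c - p) = \<rho> * (u \<bullet> y - (m - \<rho>))" for y
    using c by (simp add: p_def inner_diff_left inner_diff_right inner_commute algebra_simps)
  show "{x. u \<bullet> x \<le> m - \<rho>} = {y. (y - p) \<bullet> (c - p) \<le> 0}"
    using \<rho> by (auto simp: e mult_le_0_iff)
  show "{x. (-u) \<bullet> x \<le> - (m + \<rho>)} = {y. 2 * \<rho>\<^sup>2 \<le> (y - p) \<bullet> (c - p)}"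
    using \<rho> by (auto simp: e power2_eq_square)
qed

text \<open>Two Descartes configurations in normal form (two half-spaces bounding a slab of width \<open>2\<rho>\<close>
  and \<open>d\<close> balls of radius \<open>\<rho>\<close> centred on the middle hyperplane at mutual distance \<open>2\<rho>\<close>) are
  related by a similarity: it matches the centres and one contact point.\<close>

lemma normal_descartes_similar:
  fixes u u' :: "real^'n::finite"
  assumes W: "finite W" "w0 \<in> W"
    and u: "norm u = 1" "\<rho> > 0" "\<forall>v\<in>W. u \<bullet> c v = m" "\<forall>v\<in>W. \<forall>w\<in>W. v \<noteq> w \<longrightarrow> dist (c v) (c w) = 2 * \<rho>"
    and u': "norm u' = 1" "\<rho>' > 0" "\<forall>v\<in>W. u' \<bullet> c' v = m'"
      "\<forall>v\<in>W. \<forall>w\<in>W. v \<noteq> w \<longrightarrow> dist (c' v) (c' w) = 2 * \<rho>'"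
  obtains g where "g \<in> moebius"
    "g ` dset (Half u (m - \<rho>)) = dset (Half u' (m' - \<rho>'))"
    "g ` dset (Half (-u) (- (m + \<rho>))) = dset (Half (-u') (- (m' + \<rho>')))"
    "\<And>v. v \<in> W \<Longrightarrow> g ` dset (Ball (c v) \<rho>) = dset (Ball (c' v) \<rho>')"
proof -
  define k where "k = \<rho>' / \<rho>"
  have k: "k > 0" "\<rho>' = k * \<rho>" using u(2) u'(2) by (simp_all add: k_def)
  define p p' where "p = c w0 - \<rho> *\<^sub>R u" and "p' = c' w0 - \<rho>' *\<^sub>R u'"
  define P Q where "P i = (case i of None \<Rightarrow> p | Some v \<Rightarrow> c v)"
    and "Q i = (case i of None \<Rightarrow> p' | Some v \<Rightarrow> c' v)" for i
  have dcc: "dist (c' v) (c' w) = k * dist (c v) (c w)" if "v \<in> W" "w \<in> W" for v w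
    using u(4) u'(4) that k by (cases "v = w") auto
  have dpc: "dist p' (c' v) = k * dist p (c v)" if "v \<in> W" for v
  proof -
    have "(dist (c' w0) (c' v))\<^sup>2 + \<rho>'\<^sup>2 = k\<^sup>2 * ((dist (c w0) (c v))\<^sup>2 + \<rho>\<^sup>2)"
      using dcc[OF W(2) that] k by (simp add: power_mult_distrib algebra_simps)
    then show ?thesis
      using dist_contact_point[OF u(1)] dist_contact_point[OF u'(1)] u(3) u'(3) W(2) that k(1)
      by (simp add: p_def p'_def real_sqrt_mult)
  qed
  have "\<forall>i\<in>insert None (Some ` W). \<forall>j\<in>insert None (Some ` W). dist (Q i) (Q j) = k * dist (P i) (P j)"
    using dcc dpc by (auto simp: P_def Q_def dist_commute)
  then obtain g h where g: "moebius_similarity g k h" "\<forall>i\<in>insert None (Some ` W). h (P i) = Q i"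
    using similar_points_moebius_similarity[OF k(1)] W(1) by (metis finite_imageI finite_insert)
  have h: "h p = p'" "\<And>v. v \<in> W \<Longrightarrow> h (c v) = c' v" using g(2) by (auto simp: P_def Q_def)
  note slab = slab_halfspaces_from_contact_point[OF u(1) u(3)[rule_format, OF W(2)] u(2), folded p_def]
  note slab' = slab_halfspaces_from_contact_point[OF u'(1) u'(3)[rule_format, OF W(2)] u'(2), folded p'_def]
  note halfspace = moebius_similarity_image_halfspace[OF g(1) k(1), where p = p and q = "c w0"]
  show ?thesis
  proof (rule that)
    show "g \<in> moebius" using g(1) by (simp add: moebius_similarity_def)
    show "g ` dset (Half u (m - \<rho>)) = dset (Half u' (m' - \<rho>'))"
      using moebius_similarity_image[OF g(1)] halfspace(1) slab(1) slab'(1) h W(2) by simp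
    show "g ` dset (Half (-u) (- (m + \<rho>))) = dset (Half (-u') (- (m' + \<rho>')))"
      using moebius_similarity_image[OF g(1)] halfspace(2) slab(2) slab'(2) h W(2) k(2)
      by (simp add: power_mult_distrib mult.left_commute)
    show "g ` dset (Ball (c v) \<rho>) = dset (Ball (c' v) \<rho>')" if "v \<in> W" for v
      using moebius_similarity_image[OF g(1)] moebius_similarity_image_cball[OF g(1) k(1)] h(2)[OF that] k(2)
      by simp
  qed
qed



lemma descartes_normal_form:
  fixes B :: "'v \<Rightarrow> 'n::finite dball"
  assumes v12: "v1 \<in> V" "v2 \<in> V" "v1 \<noteq> v2"
    and w: "\<forall>v\<in>V. dball_wf (B v)" and k: "\<forall>v\<in>V. \<forall>w\<in>V. v \<noteq> w \<longrightarrow> kissing (B v) (B w)"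
  obtains f u \<rho> m c where "f \<in> moebius" "norm u = 1" "\<rho> > 0"
    "f ` dset (B v1) = dset (Half u (m - \<rho>))" "f ` dset (B v2) = dset (Half (-u) (- (m + \<rho>)))"
    "\<forall>v\<in>V - {v1, v2}. f ` dset (B v) = dset (Ball (c v) \<rho>) \<and> u \<bullet> c v = m"
    "\<forall>v\<in>V - {v1, v2}. \<forall>w\<in>V - {v1, v2}. v \<noteq> w \<longrightarrow> dist (c v) (c w) = 2 * \<rho>"
proof -
  have pair: "dball_wf (B v1)" "dball_wf (B v2)" "kissing (B v1) (B v2)" using v12 w k by auto
  obtain f u \<rho> m cen where f: "f \<in> moebius" "norm u = 1" "\<rho> > 0"
    "f ` dset (B v1) = dset (Half u (m - \<rho>))" "f ` dset (B v2) = dset (Half (-u) (- (m + \<rho>)))"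
    and cen: "\<And>b. dball_wf b \<Longrightarrow> kissing b (B v1) \<Longrightarrow> kissing b (B v2) \<Longrightarrow>
       f ` dset b = dset (Ball (cen b) \<rho>) \<and> u \<bullet> cen b = m"
    using moebius_kissing_pair_normal_form[OF pair] by blast
  have img: "f ` dset (B v) = dset (Ball (cen (B v)) \<rho>) \<and> u \<bullet> cen (B v) = m" if "v \<in> V - {v1, v2}" for v
    using cen w k v12 that by auto
  have "dist (cen (B v)) (cen (B v')) = 2 * \<rho>" if "v \<in> V - {v1, v2}" "v' \<in> V - {v1, v2}" "v \<noteq> v'" for v v'
    using moebius_equal_balls_dist(1)[OF f(1) _ _ f(3) conjunct1[OF img[OF that(1)]] conjunct1[OF img[OF that(2)]]]
      w k that by simp
  with img show ?thesis using that[OF f, of "\<lambda>v. cen (B v)"] by blast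
qed

lemma moebius_match_via_common_image:
  assumes "f1 \<in> moebius" "g \<in> moebius" "f2 \<in> moebius" "\<And>v. v \<in> V \<Longrightarrow> g ` f1 ` S v = f2 ` T v"
  obtains f where "f \<in> moebius" "\<forall>v\<in>V. f ` S v = T v"
proof -
  obtain f2' where f2': "f2' \<in> moebius" "\<And>p. f2' (f2 p) = p"
    using moebius_inverse[OF assms(3)] by metis
  have "(f2' \<circ> g \<circ> f1) ` S v = T v" if "v \<in> V" for v
  proof -
    have "(f2' \<circ> g \<circ> f1) ` S v = f2' ` g ` f1 ` S v" by (simp add: image_comp)
    also have "\<dots> = T v" using assms(4)[OF that] f2'(2) by (simp add: image_image)
    finally show ?thesis .
  qed
  with assms(1,2) f2'(1) show ?thesis by (meson moebius_comp that)
qed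

theorem descartes_moebius_equivalent:
  fixes B B' :: "'v \<Rightarrow> 'n::finite dball"
  assumes V: "finite V" "card V = CARD('n) + 2"
    and w: "\<forall>v\<in>V. dball_wf (B v)" "\<forall>v\<in>V. dball_wf (B' v)"
    and k: "\<forall>v\<in>V. \<forall>w\<in>V. v \<noteq> w \<longrightarrow> kissing (B v) (B w)" "\<forall>v\<in>V. \<forall>w\<in>V. v \<noteq> w \<longrightarrow> kissing (B' v) (B' w)"
  obtains f where "f \<in> moebius" "\<forall>v\<in>V. f ` dset (B v) = dset (B' v)"
proof -
  obtain T where "T \<subseteq> V" "card T = 2" using obtain_subset_with_card_n[of 2 V] V(2) by auto
  then obtain v1 v2 where v12: "v1 \<in> V" "v2 \<in> V" "v1 \<noteq> v2" by (auto simp: card_2_iff)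
  define W where "W = V - {v1, v2}"
  have "card W = CARD('n)" using V v12 by (simp add: W_def card_Diff_subset)
  then obtain w0 where w0: "w0 \<in> W" by (metis card.empty ex_in_conv zero_less_card_finite less_irrefl)
  obtain f1 u \<rho> m c where f1: "f1 \<in> moebius" "norm u = 1" "\<rho> > 0"
    "f1 ` dset (B v1) = dset (Half u (m - \<rho>))" "f1 ` dset (B v2) = dset (Half (-u) (- (m + \<rho>)))"
    "\<forall>v\<in>W. f1 ` dset (B v) = dset (Ball (c v) \<rho>) \<and> u \<bullet> c v = m"
    "\<forall>v\<in>W. \<forall>w\<in>W. v \<noteq> w \<longrightarrow> dist (c v) (c w) = 2 * \<rho>"
    using descartes_normal_form[OF v12 w(1) k(1)] unfolding W_def by metis
  obtain f2 u' \<rho>' m' c' where f2: "f2 \<in> moebius" "norm u' = 1" "\<rho>' > 0"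
    "f2 ` dset (B' v1) = dset (Half u' (m' - \<rho>'))" "f2 ` dset (B' v2) = dset (Half (-u') (- (m' + \<rho>')))"
    "\<forall>v\<in>W. f2 ` dset (B' v) = dset (Ball (c' v) \<rho>') \<and> u' \<bullet> c' v = m'"
    "\<forall>v\<in>W. \<forall>w\<in>W. v \<noteq> w \<longrightarrow> dist (c' v) (c' w) = 2 * \<rho>'"
    using descartes_normal_form[OF v12 w(2) k(2)] unfolding W_def by metis
  obtain g where g: "g \<in> moebius"
    "g ` dset (Half u (m - \<rho>)) = dset (Half u' (m' - \<rho>'))"
    "g ` dset (Half (-u) (- (m + \<rho>))) = dset (Half (-u') (- (m' + \<rho>')))"
    "\<And>v. v \<in> W \<Longrightarrow> g ` dset (Ball (c v) \<rho>) = dset (Ball (c' v) \<rho>')"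
    using normal_descartes_similar[of W w0 u \<rho> c m u' \<rho>' c' m'] V(1) w0 f1(2,3,6,7) f2(2,3,6,7)
    unfolding W_def by auto
  have "g ` f1 ` dset (B v) = f2 ` dset (B' v)" if v: "v \<in> V" for v
  proof -
    consider "v = v1" | "v = v2" | "v \<in> W" using v unfolding W_def by blast
    then show ?thesis
    proof cases
      case 1
      then show ?thesis by (simp only: f1(4) g(2) f2(4))
    next
      case 2
      then show ?thesis by (simp only: f1(5) g(3) f2(5))
    next
      case 3
      then show ?thesis using f1(6) f2(6) g(4)[OF 3] by simp
    qed
  qed
  from f1(1) g(1) f2(1) this that show ?thesis by (rule moebius_match_via_common_image)
qed

section \<open>Ball packings of stacked polytope graphs\<close>

lemma stacked_graph_facets:
  assumes "stacked_graph d V E Fs"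
  shows "finite V \<and> (\<forall>F\<in>Fs. F \<subseteq> V \<and> card F = d + 1 \<and> (\<forall>x\<in>F. \<forall>y\<in>F. x \<noteq> y \<longrightarrow> E x y)
    \<and> (\<exists>z\<in>V - F. \<forall>y\<in>F. E z y))"
  using assms
proof (induction rule: stacked_graph.induct)
  case (stack_simplex V)
  have "\<exists>z\<in>V - F. \<forall>y\<in>F. z \<in> V \<and> y \<in> V \<and> z \<noteq> y" if "F \<subseteq> V" "card F = d + 1" for F
  proof -
    have "finite F" using that(1) stack_simplex(1) by (rule finite_subset)
    then have "card (V - F) = 1"
      using that stack_simplex by (simp add: card_Diff_subset)
    then obtain z where "z \<in> V - F" by (metis card_1_singletonE singletonI)
    then show ?thesis using that by auto
  qed
  then show ?case using stack_simplex by auto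
next
  case (stack_glue V E Fs F w)
  define E' where "E' x y \<longleftrightarrow> E x y \<or> (x = w \<and> y \<in> F) \<or> (y = w \<and> x \<in> F)" for x y
  define facet where "facet G \<longleftrightarrow> G \<subseteq> insert w V \<and> card G = d + 1 \<and>
    (\<forall>x\<in>G. \<forall>y\<in>G. x \<noteq> y \<longrightarrow> E' x y) \<and> (\<exists>z\<in>insert w V - G. \<forall>y\<in>G. E' z y)" for G
  have IH: "finite V" "\<And>G. G \<in> Fs \<Longrightarrow> G \<subseteq> V \<and> card G = d + 1 \<and> (\<forall>x\<in>G. \<forall>y\<in>G. x \<noteq> y \<longrightarrow> E x y)
    \<and> (\<exists>z\<in>V - G. \<forall>y\<in>G. E z y)"
    using stack_glue.IH by auto
  have F: "F \<subseteq> V" "card F = d + 1" "\<forall>x\<in>F. \<forall>y\<in>F. x \<noteq> y \<longrightarrow> E x y"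
    using IH(2)[OF stack_glue.hyps(2)] by auto
  have "finite F" using F(1) IH(1) by (rule finite_subset)
  have "w \<notin> F" using F(1) stack_glue.hyps(3) by blast
  have old: "facet G" if G: "G \<in> Fs" for G
  proof -
    have G': "G \<subseteq> V" "card G = d + 1" "\<forall>x\<in>G. \<forall>y\<in>G. x \<noteq> y \<longrightarrow> E x y"
      and "\<exists>z\<in>V - G. \<forall>y\<in>G. E z y"
      using IH(2)[OF G] by simp_all
    then obtain z where "z \<in> V - G" "\<forall>y\<in>G. E z y" by blast
    then have "z \<in> insert w V - G" "\<forall>y\<in>G. E' z y" by (simp_all add: E'_def)
    moreover have "G \<subseteq> insert w V" "\<forall>x\<in>G. \<forall>y\<in>G. x \<noteq> y \<longrightarrow> E' x y"
      using G' by (auto simp: E'_def)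
    ultimately show ?thesis using G'(2) unfolding facet_def by blast
  qed
  have new: "facet (insert w (F - {u}))" if "u \<in> F" for u
  proof -
    have "u \<in> insert w V - insert w (F - {u})" "\<forall>y\<in>insert w (F - {u}). E' u y"
      using that F \<open>w \<notin> F\<close> by (auto simp: E'_def)
    moreover have "card (insert w (F - {u})) = d + 1"
      using that F(2) \<open>finite F\<close> \<open>w \<notin> F\<close> by (simp add: card.insert_remove)
    moreover have "insert w (F - {u}) \<subseteq> insert w V" using F(1) by blast
    moreover have "\<forall>x\<in>insert w (F - {u}). \<forall>y\<in>insert w (F - {u}). x \<noteq> y \<longrightarrow> E' x y"
      using F(3) by (auto simp: E'_def)
    ultimately show ?thesis unfolding facet_def by blast
  qed
  have "\<forall>G\<in>(Fs - {F}) \<union> {insert w (F - {u}) |u. u \<in> F}. facet G" using old new by blast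
  with IH(1) show ?case unfolding facet_def E'_def by (intro conjI) (simp_all only: finite_insert)
qed

lemma packing_inj: "packing V B \<Longrightarrow> inj_on B V"
proof (rule inj_onI)
  fix x y assume "packing V B" "x \<in> V" "y \<in> V" "B x = B y"
  moreover have "dint (B x) \<noteq> {}"
  proof (cases "B x")
    case (Half u a)
    then have "u \<noteq> 0" using \<open>packing V B\<close> \<open>x \<in> V\<close> by (auto simp: packing_def)
    then have "u \<bullet> (((a - 1) / (u \<bullet> u)) *\<^sub>R u) < a" by simp
    then show ?thesis using Half by (auto simp del: inner_scaleR_right)
  qed (use \<open>packing V B\<close> \<open>x \<in> V\<close> in \<open>auto simp: packing_def\<close>)
  ultimately show "x = y" unfolding packing_def by (metis Int_absorb)
qed

lemma packing_kissing:
  assumes "packing V B" "tangency_graph_is V E B" "u \<in> V" "v \<in> V" "u \<noteq> v" "E u v"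
  shows "kissing (B u) (B v)"
  using assms by (simp add: packing_def tangency_graph_is_def kissing_def)

theorem stacked_packing_apollonian:
  assumes "stacked_graph d V E Fs" "packing V B" "tangency_graph_is V E B"
  shows "apollonian d (B ` V)"
  using assms
proof (induction arbitrary: B rule: stacked_graph.induct)
  case (stack_simplex V)
  have k: "kissing (B u) (B v)" if "u \<in> V" "v \<in> V" "u \<noteq> v" for u v
    using packing_kissing[OF stack_simplex.prems] that by simp
  have "descartes d (B ` V)"
    unfolding descartes_def
  proof (intro conjI ballI impI)
    show "finite (B ` V)" "card (B ` V) = d + 2" "\<And>b. b \<in> B ` V \<Longrightarrow> dball_wf b"
      using stack_simplex packing_inj[OF stack_simplex.prems(1)] by (auto simp: card_image packing_def)
    fix b1 b2 assume "b1 \<in> B ` V" "b2 \<in> B ` V" "b1 \<noteq> b2"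
    then show "tangent b1 b2" "dint b1 \<inter> dint b2 = {}" using k unfolding kissing_def by blast+
  qed
  then show ?case by (rule apoll_base)
next
  case (stack_glue V E Fs F w)
  define E' where "E' x y \<longleftrightarrow> E x y \<or> (x = w \<and> y \<in> F) \<or> (y = w \<and> x \<in> F)" for x y
  have F: "F \<subseteq> V" "card F = d + 1" "\<forall>x\<in>F. \<forall>y\<in>F. x \<noteq> y \<longrightarrow> E x y"
    using stacked_graph_facets[OF stack_glue.hyps(1)] stack_glue.hyps(2) by auto
  note pk = packing_kissing[OF stack_glue.prems[folded E'_def]]
  have kF: "kissing (B x) (B y)" if "x \<in> F" "y \<in> F" "x \<noteq> y" for x y
    using pk[of x y] F that by (auto simp: E'_def)
  have kw: "kissing (B w) (B y)" if "y \<in> F" for y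
    using pk[of w y] F that stack_glue.hyps(3) by (auto simp: E'_def)
  have inj: "inj_on B (insert w V)" using packing_inj stack_glue.prems(1) by blast
  have "packing V B" "tangency_graph_is V E B"
    using stack_glue.prems stack_glue.hyps(3) by (auto simp: packing_def tangency_graph_is_def)
  then have "apollonian d (B ` V)" by (rule stack_glue.IH)
  then have "apollonian d (insert (B w) (B ` V))"
  proof (rule apoll_step[of d "B ` V" "B ` F"])
    show "B ` F \<subseteq> B ` V" "card (B ` F) = d + 1"
      using F inj by (auto simp: card_image inj_on_subset subset_insertI2)
    show "\<forall>t1\<in>B ` F. \<forall>t2\<in>B ` F. t1 \<noteq> t2 \<longrightarrow> tangent t1 t2"
      using kF by (auto simp: kissing_def)
    show "dball_wf (B w)" "B w \<notin> B ` V" "\<forall>t\<in>B ` F. tangent (B w) t"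
      using stack_glue.prems(1) inj stack_glue.hyps(3) kw by (auto simp: packing_def kissing_def)
  qed
  then show ?case by simp
qed

text \<open>The ball of the old vertex \<open>z\<close> kissing all of \<open>F\<close> singles out which of the two balls
  completing the facet is meant.\<close>

lemma moebius_match_extends_to_new_vertex:
  fixes B B' :: "'v \<Rightarrow> 'n::finite dball"
  assumes f: "f \<in> moebius" "\<forall>v\<in>V. f ` dset (B v) = dset (B' v)"
    and F: "finite F" "F \<subseteq> V" "card F = CARD('n) + 1" and z: "z \<in> V"
    and wf: "\<And>C v. C \<in> {B, B'} \<Longrightarrow> v \<in> insert w V \<Longrightarrow> dball_wf (C v)"
    and kF: "\<And>C x y. C \<in> {B, B'} \<Longrightarrow> x \<in> F \<Longrightarrow> y \<in> F \<Longrightarrow> x \<noteq> y \<Longrightarrow> kissing (C x) (C y)"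
    and kw: "\<And>C y. C \<in> {B, B'} \<Longrightarrow> y \<in> F \<Longrightarrow> kissing (C w) (C y) \<and> kissing (C z) (C y)"
    and wz: "\<And>C. C \<in> {B, B'} \<Longrightarrow> dint (C w) \<inter> dint (C z) = {}"
  shows "f ` dset (B w) = dset (B' w)"
proof -
  have "dball_wf (B w)" using wf by simp
  then obtain bw where bw: "dball_wf bw" "f ` dset (B w) = dset bw" "f ` dint (B w) = dint bw"
    by (rule moebius_image_dball[OF f(1)])
  have wf4: "\<forall>b\<in>{B w, B v, bw, B' v}. dball_wf b" if "v \<in> V" for v
    using wf bw(1) that by auto
  have "dset bw = dset (B' w)"
  proof (rule kissing_completion_unique[of F B' bw "B' w" "B' z"])
    show "\<forall>i\<in>F. kissing bw (B' i)"
    proof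
      fix i assume "i \<in> F"
      then have "i \<in> V" "kissing (B w) (B i)" using F(2) kw[of B i] by auto
      then show "kissing bw (B' i)"
        using moebius_kissing_iff[OF f(1) wf4[OF \<open>i \<in> V\<close>] bw(2)] f(2) by simp
    qed
    show "dint bw \<inter> dint (B' z) = {}"
      using moebius_disjoint_iff[OF f(1) wf4[OF z] bw(2)] f(2) wz[of B] z by simp
    show "\<forall>i\<in>F. dball_wf (B' i)" "dball_wf (B' w)" "dball_wf (B' z)"
      using wf F(2) z by blast+
    show "\<forall>i\<in>F. \<forall>j\<in>F. i \<noteq> j \<longrightarrow> kissing (B' i) (B' j)" using kF by blast
    show "\<forall>i\<in>F. kissing (B' w) (B' i)" "\<forall>i\<in>F. kissing (B' z) (B' i)" using kw by blast+
    show "dint (B' w) \<inter> dint (B' z) = {}" using wz by blast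
    show "finite F" "card F = CARD('n) + 1" "dball_wf bw" by fact+
  qed
  then show ?thesis using bw(2) by simp
qed

theorem stacked_packing_unique:
  assumes "stacked_graph (CARD('n)) V E Fs"
    and "packing V (B :: 'v \<Rightarrow> 'n::finite dball)" "tangency_graph_is V E B"
    and "packing V B'" "tangency_graph_is V E B'"
  obtains f where "f \<in> moebius" "\<forall>v\<in>V. f ` dset (B v) = dset (B' v)"
  using assms
proof (induction arbitrary: B B' thesis rule: stacked_graph.induct)
  case (stack_simplex V)
  have k: "\<forall>u\<in>V. \<forall>v\<in>V. u \<noteq> v \<longrightarrow> kissing (B u) (B v)"
    "\<forall>u\<in>V. \<forall>v\<in>V. u \<noteq> v \<longrightarrow> kissing (B' u) (B' v)"
    using packing_kissing[OF stack_simplex.prems(2,3)] packing_kissing[OF stack_simplex.prems(4,5)] by simp_all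
  have w: "\<forall>v\<in>V. dball_wf (B v)" "\<forall>v\<in>V. dball_wf (B' v)"
    using stack_simplex.prems(2,4) by (simp_all add: packing_def)
  show ?case
    by (rule descartes_moebius_equivalent[OF stack_simplex.hyps w k]) (rule stack_simplex.prems(1))
next
  case (stack_glue V E Fs F w)
  define E' where "E' = (\<lambda>x y. E x y \<or> (x = w \<and> y \<in> F) \<or> (y = w \<and> x \<in> F))"
  have F: "F \<subseteq> V" "card F = CARD('n) + 1" "\<forall>x\<in>F. \<forall>y\<in>F. x \<noteq> y \<longrightarrow> E x y"
    and "finite V" "\<exists>z\<in>V - F. \<forall>y\<in>F. E z y"
    using stacked_graph_facets[OF stack_glue.hyps(1)] stack_glue.hyps(2) by simp_all
  then obtain z where z: "z \<in> V" "z \<notin> F" "\<forall>y\<in>F. E z y" by blast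
  have "finite F" using F(1) \<open>finite V\<close> by (rule finite_subset)
  have wV: "w \<notin> V" by (rule stack_glue.hyps(3))
  have kiss: "kissing (C x) (C y)"
    if "packing (insert w V) C" "tangency_graph_is (insert w V) E' C" "x \<in> insert w V" "y \<in> insert w V"
      "x \<noteq> y" "E' x y" for C x y
    using packing_kissing[OF that(1,2)] that(3-6) .
  have restr: "packing V B" "tangency_graph_is V E B" "packing V B'" "tangency_graph_is V E B'"
    using stack_glue.prems wV by (auto simp: packing_def tangency_graph_is_def E'_def)
  obtain f where f: "f \<in> moebius" "\<forall>v\<in>V. f ` dset (B v) = dset (B' v)"
    by (rule stack_glue.IH[OF _ restr])
  have "f ` dset (B w) = dset (B' w)"
  proof (rule moebius_match_extends_to_new_vertex[OF f \<open>finite F\<close> F(1,2) z(1)])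
    show "kissing (C x) (C y)" if "C \<in> {B, B'}" "x \<in> F" "y \<in> F" "x \<noteq> y" for C x y
      using kiss[of C x y] stack_glue.prems[folded E'_def] that F by (auto simp: E'_def)
    show "kissing (C w) (C y) \<and> kissing (C z) (C y)" if "C \<in> {B, B'}" "y \<in> F" for C y
      using kiss[of C w y] kiss[of C z y] stack_glue.prems[folded E'_def] that F z wV by (auto simp: E'_def)
    show "dball_wf (C v)" if "C \<in> {B, B'}" "v \<in> insert w V" for C v
      using stack_glue.prems(2,4) that by (auto simp: packing_def)
    show "dint (C w) \<inter> dint (C z) = {}" if "C \<in> {B, B'}" for C
      using stack_glue.prems(2,4) that z(1) wV by (auto simp: packing_def)
  qed
  with f(2) have "\<forall>v\<in>insert w V. f ` dset (B v) = dset (B' v)" by blast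
  then show ?case by (rule stack_glue.prems(1)[OF f(1)])
qed

theorem theorem4p1:
  fixes V :: "'v set" and E :: "'v \<Rightarrow> 'v \<Rightarrow> bool"
    and B :: "'v \<Rightarrow> ('n::finite) dball"
  assumes "CARD('n) \<ge> 2"
    and "stacked_polytope_graph (CARD('n)) V E"
    and "packing V B" and "tangency_graph_is V E B"
  shows "apollonian (CARD('n)) (B ` V) \<and>
    (\<forall>B' :: 'v \<Rightarrow> 'n dball. packing V B' \<and> tangency_graph_is V E B' \<longrightarrow>
       (\<exists>f \<in> moebius. \<forall>v\<in>V. f ` dset (B v) = dset (B' v)))"
proof -
  obtain Fs where Fs: "stacked_graph (CARD('n)) V E Fs"
    using assms(2) unfolding stacked_polytope_graph_def by blast
  show ?thesis
  proof (intro conjI allI impI)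
    show "apollonian (CARD('n)) (B ` V)" by (rule stacked_packing_apollonian[OF Fs assms(3,4)])
    fix B' :: "'v \<Rightarrow> 'n dball"
    assume "packing V B' \<and> tangency_graph_is V E B'"
    then obtain f where "f \<in> moebius" "\<forall>v\<in>V. f ` dset (B v) = dset (B' v)"
      using stacked_packing_unique[OF Fs assms(3,4)] by blast
    then show "\<exists>f\<in>moebius. \<forall>v\<in>V. f ` dset (B v) = dset (B' v)" by blast
  qed
qed

end
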